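(* Consider the cache-aided packet-erasure broadcast network described in the context. For $t\in\{0,1,\dots,K_\mathrm{w}\}$ define \[ R_{t,\mathrm{sep}}:=F\left(\frac{K_\mathrm{w}-t}{(t+1)(1-\delta_\mathrm{w})}+\frac{K_\mathrm{s}}{1-\delta_\mathrm{s}}\right)^{-1},\qquad M_{t,\mathrm{sep}}:=D\frac{t}{K_\mathrm{w}}R_{t,\mathrm{sep}}. \] Then every point of the upper convex hull of $\{(M_{t,\mathrm{sep}},R_{t,\mathrm{sep}}):t=0,\dots,K_\mathrm{w}\}$ is achievable; that is, for every $M\in[0,M_{K_\mathrm{w},\mathrm{sep}}]$, \[ C(M)\ge\max\Big\{\sum_{t=0}^{K_\mathrm{w}}\lambda_tR_{t,\mathrm{sep}}:\lambda_t\ge0,\ \sum_t\lambda_t=1,\ \sum_t\lambda_tM_{t,\mathrm{sep}}=M\Big\}. \]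
   Context: Setting (packet-erasure broadcast channel with receiver caches). Let $K_\mathrm{w},K_\mathrm{s}\ge1$ be integers, $K=K_\mathrm{w}+K_\mathrm{s}$, $D\ge K$ an integer, $F$ a positive integer, and $0<\delta_\mathrm{s}\le\delta_\mathrm{w}<1$. The channel is memoryless with input alphabet $\mathcal X=\{0,1\}^F$; receiver $k\in\{1,\dots,K\}$ observes $Y_k=x$ with probability $1-\delta_k$ and an erasure symbol $\Delta$ with probability $\delta_k$. Receivers $1,\dots,K_\mathrm{w}$ are weak ($\delta_k=\delta_\mathrm{w}$), receivers $K_\mathrm{w}+1,\dots,K$ are strong ($\delta_k=\delta_\mathrm{s}$). A library of $D$ independent messages $W_1,\dots,W_D$, each uniform on $\{1,\dots,\lfloor 2^{nR}\rfloor\}$. Caching phase (demands unknown): weak receiver $i$ stores $V_i=g_i(W_1,\dots,W_D)\in\{1,\dots,\lfloor2^{nM}\rfloor\}$; strong receivers have no cache. Delivery: an arbitrary demand vector $\mathbf d\in\{1,\dots,D\}^K$ is known to all; transmitter sends $X^n=f_{\mathbf d}(W_1,\dots,W_D)$; weak receiver $i$ decodes from $(Y_i^n,V_i)$, strong receiver $j$ from $Y_j^n$, each aiming at $W_{d_k}$. $(R,M)$ is achievable if for every $\epsilon>0$ there exist $n$ and such functions with worst-case (over all demand vectors) probability that some receiver errs $<\epsilon$. $C(M)$ is the supremum of achievable $R$ for memory $M$. *)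

theory Defs
  imports "HOL-Probability.Probability"
begin

text \<open>Receivers are indexed 1..K with K = Kw + Ks; receivers 1..Kw are weak,
  Kw+1..K are strong.  A channel symbol is a bit list of length F; an output
  symbol is an option (None = erasure).\<close>

definition erasure_prob :: "nat \<Rightarrow> real \<Rightarrow> real \<Rightarrow> nat \<Rightarrow> real" where
  "erasure_prob Kw dw ds k = (if k \<le> Kw then dw else ds)"

text \<open>Per-channel-use law of the set of erased receivers (independent of the input,
  i.i.d. over time); only the marginals are prescribed by the model.\<close>
definition valid_erasure_law :: "nat \<Rightarrow> nat \<Rightarrow> real \<Rightarrow> real \<Rightarrow> nat set pmf \<Rightarrow> bool" where
  "valid_erasure_law Kw Ks dw ds E \<longleftrightarrow>
     set_pmf E \<subseteq> Pow {1..Kw+Ks} \<and>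
     (\<forall>k\<in>{1..Kw+Ks}. measure_pmf.prob E {S. k \<in> S} = erasure_prob Kw dw ds k)"

definition num_msgs :: "nat \<Rightarrow> real \<Rightarrow> nat" where
  "num_msgs n R = nat \<lfloor>2 powr (real n * R)\<rfloor>"

definition msg_set :: "nat \<Rightarrow> nat \<Rightarrow> real \<Rightarrow> (nat \<Rightarrow> nat) set" where
  "msg_set D n R = PiE {1..D} (\<lambda>_. {1..num_msgs n R})"

definition demand_set :: "nat \<Rightarrow> nat \<Rightarrow> (nat \<Rightarrow> nat) set" where
  "demand_set K D = PiE {1..K} (\<lambda>_. {1..D})"

definition channel_out :: "nat \<Rightarrow> (nat \<Rightarrow> nat set) \<Rightarrow> (nat \<Rightarrow> bool list) \<Rightarrow> nat
    \<Rightarrow> (nat \<Rightarrow> bool list option)" where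
  "channel_out n e x k = (\<lambda>t. if t < n \<and> k \<notin> e t then Some (x t) else None)"

text \<open>Probability (uniform messages, memoryless erasures) that some receiver errs
  under demand vector d.  g i w: cache of weak receiver i;
  f d w: transmitted sequence; phi d k y v: decoder of receiver k
  (strong receivers are given the constant 0 instead of a cache).\<close>
definition error_prob ::
  "nat \<Rightarrow> nat \<Rightarrow> nat \<Rightarrow> nat set pmf \<Rightarrow> nat \<Rightarrow> real
   \<Rightarrow> (nat \<Rightarrow> (nat \<Rightarrow> nat) \<Rightarrow> nat)
   \<Rightarrow> ((nat \<Rightarrow> nat) \<Rightarrow> (nat \<Rightarrow> nat) \<Rightarrow> nat \<Rightarrow> bool list)
   \<Rightarrow> ((nat \<Rightarrow> nat) \<Rightarrow> nat \<Rightarrow> (nat \<Rightarrow> bool list option) \<Rightarrow> nat \<Rightarrow> nat)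
   \<Rightarrow> (nat \<Rightarrow> nat) \<Rightarrow> real" where
  "error_prob Kw Ks D E n R g f phi d =
     (\<Sum>w\<in>msg_set D n R. \<Sum>e\<in>PiE {0..<n} (\<lambda>_. Pow {1..Kw+Ks}).
        (\<Prod>t<n. pmf E (e t)) *
        (if (\<exists>k\<in>{1..Kw+Ks}.
               phi d k (channel_out n e (f d w) k) (if k \<le> Kw then g k w else 0) \<noteq> w (d k))
         then 1 else 0))
     / real (card (msg_set D n R))"

definition achievable ::
  "nat \<Rightarrow> nat \<Rightarrow> nat \<Rightarrow> nat \<Rightarrow> nat set pmf \<Rightarrow> real \<Rightarrow> real \<Rightarrow> bool" where
  "achievable Kw Ks D F E R M \<longleftrightarrow> 0 \<le> R \<and> 0 \<le> M \<and>
     (\<forall>\<epsilon>>0. \<exists>n>0. \<exists>g f phi.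
        (\<forall>i\<in>{1..Kw}. \<forall>w\<in>msg_set D n R. g i w \<in> {1..num_msgs n M}) \<and>
        (\<forall>d\<in>demand_set (Kw+Ks) D. \<forall>w\<in>msg_set D n R. \<forall>t<n. length (f d w t) = F) \<and>
        (\<forall>d\<in>demand_set (Kw+Ks) D. error_prob Kw Ks D E n R g f phi d < \<epsilon>))"

definition capacity :: "nat \<Rightarrow> nat \<Rightarrow> nat \<Rightarrow> nat \<Rightarrow> nat set pmf \<Rightarrow> real \<Rightarrow> ereal" where
  "capacity Kw Ks D F E M = Sup {ereal R | R. achievable Kw Ks D F E R M}"

definition R_sep :: "nat \<Rightarrow> nat \<Rightarrow> nat \<Rightarrow> real \<Rightarrow> real \<Rightarrow> nat \<Rightarrow> real" where
  "R_sep Kw Ks F dw ds t =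
     real F / ((real Kw - real t) / ((real t + 1) * (1 - dw)) + real Ks / (1 - ds))"

definition M_sep :: "nat \<Rightarrow> nat \<Rightarrow> nat \<Rightarrow> nat \<Rightarrow> real \<Rightarrow> real \<Rightarrow> nat \<Rightarrow> real" where
  "M_sep Kw Ks D F dw ds t = real D * (real t / real Kw) * R_sep Kw Ks F dw ds t"

end

theory Submission
  imports Defs
begin

text \<open>
  Split every file, in the manner of Maddah-Ali and
  Niesen, into subfiles indexed by the sets \<open>T\<close> of weak receivers, a subfile with \<open>|T| = t\<close>
  carrying about \<open>n lam t R_sep t / (Kw choose t)\<close> bits; weak receiver \<open>i\<close> caches the subfiles
  with \<open>i \<in> T\<close>, which fits into memory precisely because \<open>\<Sum>t. lam t M_sep t = M\<close>. For every
  nonempty set \<open>S\<close> of weak receivers the subfiles \<open>W (d k) (S - {k})\<close>, \<open>k \<in> S\<close>, are sent jointly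
  in a block of their own, and every strong receiver gets its whole file in a block of its own.
  Within a block every receiver knows from its cache all these subfiles except its own, so it
  faces a point-to-point erasure channel. For a uniformly random codebook, the bound
  \<open>min 1 x \<le> x powr s\<close> shows that the probability of confusing its subfile with one of the
  \<open>Q - 1\<close> other candidates during \<open>l\<close> channel uses is at most
  \<open>(Q - 1) powr s * (\<delta> + (1 - \<delta>) 2 powr (-F s)) ^ l\<close>, which vanishes once
  \<open>l \<ge> (1 + \<eta>) log 2 Q / (F (1 - \<delta>))\<close> and \<open>s\<close> is small. By the definition of \<open>R_sep\<close> these
  blocks fit into \<open>n\<close> channel uses, so the rate \<open>(1 - 2\<eta>) \<Sum>t. lam t R_sep t\<close> is achievable for
  every \<open>\<eta>\<close>.
\<close>

section \<open>Independent erasures\<close>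

lemma sum_pmf_mult_if:
  fixes p :: "'a pmf" and z :: real
  assumes "finite A" "set_pmf p \<subseteq> A"
  shows "(\<Sum>x\<in>A. pmf p x * (if P x then 1 else z))
       = measure_pmf.prob p {x. P x} + (1 - measure_pmf.prob p {x. P x}) * z"
proof -
  have "measure_pmf.prob p {x. P x} = measure_pmf.prob p {x\<in>A. P x}"
    using assms(2) by (intro measure_eq_AE) (auto simp: AE_measure_pmf_iff)
  also have "\<dots> = (\<Sum>x\<in>A. pmf p x * (if P x then 1 else 0))"
    using assms(1) by (simp add: measure_measure_pmf_finite sum.inter_filter if_distrib cong: if_cong)
  finally have prob: "measure_pmf.prob p {x. P x} = (\<Sum>x\<in>A. pmf p x * (if P x then 1 else 0))" .
  have "(\<Sum>x\<in>A. pmf p x * (if P x then 1 else z))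
      = z * (\<Sum>x\<in>A. pmf p x) + (1 - z) * (\<Sum>x\<in>A. pmf p x * (if P x then 1 else 0))"
    by (simp add: sum_distrib_left sum.distrib[symmetric] algebra_simps if_distrib cong: if_cong)
  then show ?thesis using sum_pmf_eq_1[OF assms] prob by (simp add: algebra_simps)
qed

lemma sum_PiE_iid_prod:
  fixes p :: "'a pmf" and h :: "'a \<Rightarrow> real" and n :: nat
  assumes A: "finite A" "set_pmf p \<subseteq> A" and I: "I \<subseteq> {0..<n}"
  shows "(\<Sum>e\<in>PiE {0..<n} (\<lambda>_. A). (\<Prod>t<n. pmf p (e t)) * (\<Prod>t\<in>I. h (e t)))
       = (\<Sum>x\<in>A. pmf p x * h x) ^ card I"
proof -
  have nI: "{0..<n} \<inter> I = I" using I by blast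
  have "(\<Sum>e\<in>PiE {0..<n} (\<lambda>_. A). (\<Prod>t<n. pmf p (e t)) * (\<Prod>t\<in>I. h (e t)))
      = (\<Sum>e\<in>PiE {0..<n} (\<lambda>_. A). \<Prod>t\<in>{0..<n}. pmf p (e t) * (if t \<in> I then h (e t) else 1))"
  proof (intro sum.cong refl)
    fix e
    have "(\<Prod>t\<in>I. h (e t)) = (\<Prod>t\<in>{0..<n}. if t \<in> I then h (e t) else 1)"
      using prod.inter_restrict[of "{0..<n}" "\<lambda>t. h (e t)" I] by (simp add: nI)
    then show "(\<Prod>t<n. pmf p (e t)) * (\<Prod>t\<in>I. h (e t))
        = (\<Prod>t\<in>{0..<n}. pmf p (e t) * (if t \<in> I then h (e t) else 1))"
      by (simp add: prod.distrib atLeast0LessThan)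
  qed
  also have "\<dots> = (\<Prod>t\<in>{0..<n}. \<Sum>x\<in>A. pmf p x * (if t \<in> I then h x else 1))"
    by (rule prod_sum_PiE[symmetric]) (use A in auto)
  also have "\<dots> = (\<Prod>t\<in>{0..<n}. if t \<in> I then (\<Sum>x\<in>A. pmf p x * h x) else 1)"
    using sum_pmf_eq_1[OF A] by (intro prod.cong) auto
  also have "\<dots> = (\<Sum>x\<in>A. pmf p x * h x) ^ card I"
    using prod.inter_restrict[of "{0..<n}" "\<lambda>_. \<Sum>x\<in>A. pmf p x * h x" I] by (simp add: nI)
  finally show ?thesis .
qed

lemma valid_erasure_law_sum_prod:
  fixes n :: nat and z :: real
  assumes "valid_erasure_law Kw Ks dw ds E" "k \<in> {1..Kw+Ks}" "I \<subseteq> {0..<n}"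
  shows "(\<Sum>e\<in>PiE {0..<n} (\<lambda>_. Pow {1..Kw+Ks}). (\<Prod>t<n. pmf E (e t)) *
            (\<Prod>t\<in>I. if k \<in> e t then 1 else z))
       = (erasure_prob Kw dw ds k + (1 - erasure_prob Kw dw ds k) * z) ^ card I"
proof -
  have E: "finite (Pow {1..Kw+Ks})" "set_pmf E \<subseteq> Pow {1..Kw+Ks}"
    using assms(1) unfolding valid_erasure_law_def by auto
  have "measure_pmf.prob E {S. k \<in> S} = erasure_prob Kw dw ds k"
    using assms(1,2) unfolding valid_erasure_law_def by blast
  then have "(\<Sum>S\<in>Pow {1..Kw+Ks}. pmf E S * (if k \<in> S then 1 else z))
      = erasure_prob Kw dw ds k + (1 - erasure_prob Kw dw ds k) * z"
    by (simp only: sum_pmf_mult_if[OF E])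
  then show ?thesis
    by (simp only: sum_PiE_iid_prod[OF E assms(3), of "\<lambda>S. if k \<in> S then 1 else z"])
qed

section \<open>Counting\<close>

lemma card_PiE_agree:
  assumes fU: "finite U" and fV: "finite V" and a: "a \<in> U" and b: "b \<in> U" and ab: "a \<noteq> b"
  shows "card {\<phi>\<in>PiE U (\<lambda>_. V). \<phi> a = \<phi> b} * card V = card (PiE U (\<lambda>_. V))"
proof -
  have bij: "bij_betw (\<lambda>\<phi>. restrict \<phi> (U - {a})) {\<phi>\<in>PiE U (\<lambda>_. V). \<phi> a = \<phi> b} (PiE (U - {a}) (\<lambda>_. V))"
  proof (rule bij_betwI[where g = "\<lambda>\<psi>. \<psi>(a := \<psi> b)"])
    show "(\<lambda>\<phi>. restrict \<phi> (U - {a})) \<in> {\<phi>\<in>PiE U (\<lambda>_. V). \<phi> a = \<phi> b} \<rightarrow> PiE (U - {a}) (\<lambda>_. V)"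
      by (auto simp: PiE_iff)
    show "(\<lambda>\<psi>. \<psi>(a := \<psi> b)) \<in> PiE (U - {a}) (\<lambda>_. V) \<rightarrow> {\<phi>\<in>PiE U (\<lambda>_. V). \<phi> a = \<phi> b}"
      using a b ab by (auto simp: PiE_iff extensional_def)
    show "\<And>x. x \<in> {\<phi>\<in>PiE U (\<lambda>_. V). \<phi> a = \<phi> b} \<Longrightarrow> (restrict x (U - {a}))(a := restrict x (U - {a}) b) = x"
      using a b ab by (auto simp: PiE_iff extensional_def fun_eq_iff)
    show "\<And>y. y \<in> PiE (U - {a}) (\<lambda>_. V) \<Longrightarrow> restrict (y(a := y b)) (U - {a}) = y"
      using a b ab by (auto simp: PiE_iff extensional_def fun_eq_iff)
  qed
  have "card {\<phi>\<in>PiE U (\<lambda>_. V). \<phi> a = \<phi> b} = card V ^ card (U - {a})"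
    using bij_betw_same_card[OF bij] fU by (simp add: card_PiE)
  moreover have "card U = Suc (card (U - {a}))" using card_Suc_Diff1[OF fU a] by simp
  ultimately show ?thesis using fU by (simp add: card_PiE mult.commute)
qed

lemma prod_if_1_eq_power:
  assumes "finite A"
  shows "(\<Prod>x\<in>A. if P x then 1 else a) = a ^ card {x\<in>A. \<not> P x}"
proof -
  have "(\<Prod>x\<in>A. if P x then 1 else a) = (\<Prod>x\<in>A. if \<not> P x then a else 1)"
    by (intro prod.cong) auto
  then show ?thesis using prod.inter_filter[OF assms, of "\<lambda>_. a" "\<lambda>x. \<not> P x"] by simp
qed

lemma sum_Pow_card:
  assumes "finite A"
  shows "(\<Sum>T\<in>Pow A. f (card T)) = (\<Sum>t=0..card A. of_nat (card A choose t) * (f t :: real))"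
proof -
  have "(\<Sum>T\<in>Pow A. f (card T)) = (\<Sum>t\<in>{0..card A}. \<Sum>T\<in>{T\<in>Pow A. card T = t}. f (card T))"
    using assms by (intro sum.group[symmetric]) (auto intro: card_mono)
  also have "\<dots> = (\<Sum>t\<in>{0..card A}. of_nat (card A choose t) * f t)"
  proof (rule sum.cong)
    fix t
    have "{T\<in>Pow A. card T = t} = {B. B \<subseteq> A \<and> card B = t}" by auto
    then show "(\<Sum>T\<in>{T\<in>Pow A. card T = t}. f (card T)) = of_nat (card A choose t) * f t"
      using n_subsets[OF assms] by simp
  qed simp
  finally show ?thesis .
qed

lemma sum_Pow_card_mem:
  assumes "finite A" "i \<in> A"
  shows "(\<Sum>T\<in>{T\<in>Pow A. i \<in> T}. f (card T))
       = (\<Sum>t=0..card A - 1. of_nat ((card A - 1) choose t) * (f (Suc t) :: real))"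
proof -
  have fA: "finite (A - {i})" using assms by simp
  have "(\<Sum>T\<in>{T\<in>Pow A. i \<in> T}. f (card T)) = (\<Sum>T\<in>Pow (A - {i}). f (card (insert i T)))"
    by (rule sum.reindex_bij_witness[where i="insert i" and j="\<lambda>T. T - {i}"])
      (use assms in \<open>auto simp: insert_absorb\<close>)
  also have "\<dots> = (\<Sum>T\<in>Pow (A - {i}). f (Suc (card T)))"
  proof (intro sum.cong refl)
    fix T assume "T \<in> Pow (A - {i})"
    then have "finite T" "i \<notin> T" using fA finite_subset by auto
    then show "f (card (insert i T)) = f (Suc (card T))" by simp
  qed
  also have "\<dots> = (\<Sum>t=0..card (A - {i}). of_nat (card (A - {i}) choose t) * f (Suc t))"
    by (rule sum_Pow_card[OF fA])
  finally show ?thesis using assms by simp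
qed

lemma sum_Pow_nonempty_card:
  assumes "finite A"
  shows "(\<Sum>S\<in>{S\<in>Pow A. S \<noteq> {}}. f (card S - 1))
       = (\<Sum>u=0..card A. real (card A choose Suc u) * (f u :: real))"
proof -
  define g where "g t = (if t = 0 then 0 else f (t - 1))" for t
  have "(\<Sum>S\<in>{S\<in>Pow A. S \<noteq> {}}. f (card S - 1)) = (\<Sum>S\<in>Pow A. if S \<noteq> {} then f (card S - 1) else 0)"
    using sum.inter_filter[of "Pow A" "\<lambda>S. f (card S - 1)" "\<lambda>S. S \<noteq> {}"] assms by simp
  also have "\<dots> = (\<Sum>S\<in>Pow A. g (card S))"
    using assms by (intro sum.cong refl) (auto simp: g_def finite_subset)
  also have "\<dots> = (\<Sum>t=0..card A. real (card A choose t) * g t)" by (rule sum_Pow_card[OF assms])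
  also have "\<dots> = (\<Sum>t=Suc 0..Suc (card A). real (card A choose t) * g t)"
    by (simp add: sum.atLeast_Suc_atMost g_def)
  also have "\<dots> = (\<Sum>u=0..card A. real (card A choose Suc u) * f u)"
    unfolding sum.shift_bounds_cl_Suc_ivl by (simp add: g_def)
  finally show ?thesis .
qed

lemma binomial_Suc_mult:
  "real (n choose Suc u) * (real u + 1) = real (n choose u) * (real n - real u)"
proof (cases "u \<le> n")
  case True
  have "Suc u * (n choose Suc u) = (n - u) * (n choose u)"
    using times_binomial_minus1_eq[of "Suc u" n] binomial_absorb_comp[of n u] by simp
  then have "real (Suc u * (n choose Suc u)) = real ((n - u) * (n choose u))" by (rule arg_cong)
  then show ?thesis using True by (simp add: of_nat_diff algebra_simps)
qed (simp add: binomial_eq_0)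

lemma exists_disjoint_slots:
  fixes l :: "'j \<Rightarrow> nat"
  assumes "finite J"
  shows "\<exists>I. (\<forall>j\<in>J. I j \<subseteq> {0..<(\<Sum>j\<in>J. l j)} \<and> card (I j) = l j) \<and>
             (\<forall>j1\<in>J. \<forall>j2\<in>J. j1 \<noteq> j2 \<longrightarrow> I j1 \<inter> I j2 = {})"
  using assms
proof (induction J rule: finite_induct)
  case (insert x J)
  then obtain I where I: "\<forall>j\<in>J. I j \<subseteq> {0..<(\<Sum>j\<in>J. l j)} \<and> card (I j) = l j"
    and dis: "\<forall>j1\<in>J. \<forall>j2\<in>J. j1 \<noteq> j2 \<longrightarrow> I j1 \<inter> I j2 = {}" by (elim exE conjE)
  define s where "s = (\<Sum>j\<in>J. l j)"
  have tot: "(\<Sum>j\<in>insert x J. l j) = s + l x" using insert unfolding s_def by simp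
  define I' where "I' = I(x := {s..<s + l x})"
  have Ix: "I' x = {s..<s + l x}" unfolding I'_def by simp
  have IJ: "I' j = I j" "I j \<subseteq> {0..<s}" "card (I j) = l j" if "j \<in> J" for j
    using that I insert(2) unfolding I'_def s_def by auto
  have "I' j \<subseteq> {0..<s + l x} \<and> card (I' j) = l j" if "j \<in> insert x J" for j
  proof (cases "j = x")
    case False
    then have "j \<in> J" using that by simp
    then show ?thesis using IJ[of j] by auto
  qed (simp add: Ix)
  moreover have "I' j1 \<inter> I' j2 = {}" if j: "j1 \<in> insert x J" "j2 \<in> insert x J" "j1 \<noteq> j2" for j1 j2
  proof -
    have new: "I' j \<inter> I' x = {}" if "j \<in> J" for j using IJ[OF that] Ix by auto
    consider "j1 = x" "j2 \<in> J" | "j2 = x" "j1 \<in> J" | "j1 \<in> J" "j2 \<in> J" using j by auto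
    then show ?thesis
    proof cases
      case 1 then show ?thesis using new[of j2] by blast
    next
      case 2 then show ?thesis using new[of j1] by blast
    next
      case 3 then show ?thesis using dis j(3) IJ(1) by simp
    qed
  qed
  ultimately show ?case unfolding tot by (intro exI[of _ I']) blast
qed simp

lemma exists_le_average:
  fixes f :: "'a \<Rightarrow> real"
  assumes "finite A" "A \<noteq> {}" "(\<Sum>x\<in>A. f x) \<le> real (card A) * c"
  shows "\<exists>x\<in>A. f x \<le> c"
proof (rule ccontr)
  assume "\<not> ?thesis"
  then have "(\<Sum>x\<in>A. c) < (\<Sum>x\<in>A. f x)"
    using assms(1,2) by (intro sum_strict_mono) auto
  then show False using assms(3) by simp
qed

section \<open>Real-analytic estimates\<close>

lemma min_1_le_powr:
  fixes x s :: real
  assumes "0 \<le> x" "0 < s" "s \<le> 1"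
  shows "min 1 x \<le> x powr s"
proof (cases "x \<le> 1")
  case True
  show ?thesis
  proof (cases "x = 0")
    case False
    then have "x powr 1 \<le> x powr s" using True assms by (intro powr_mono') auto
    then show ?thesis using False assms by simp
  qed simp
next
  case False
  then have "1 \<le> x powr s" using assms by (simp add: ge_one_powr_ge_zero)
  then show ?thesis by simp
qed

lemma powr_mult_inverse_power:
  fixes x s :: real
  assumes "0 \<le> x"
  shows "(x * (1 / 2 ^ F) ^ c) powr s = x powr s * (2 powr (- real F * s)) ^ c"
proof -
  have "((1::real) / 2 ^ F) ^ c = 1 / 2 ^ (F * c)" by (simp add: power_mult power_one_over)
  also have "\<dots> = 2 powr (- real F * real c)"
    using powr_realpow[of 2 "F * c"] by (simp add: powr_minus divide_inverse)
  finally have "(((1::real) / 2 ^ F) ^ c) powr s = 2 powr (- real F * s * real c)"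
    by (simp add: powr_powr mult_ac)
  also have "\<dots> = (2 powr (- real F * s)) ^ c" by (simp add: powr_powr flip: powr_realpow)
  finally show ?thesis using assms by (simp add: powr_mult)
qed

lemma erasure_factor_lt_near_0:
  fixes \<delta> c F :: real
  assumes "0 \<le> \<delta>" "\<delta> < 1" "0 < c" "c < 1 - \<delta>" "0 < F"
  shows "\<exists>d>0. \<forall>s. 0 < s \<and> s < d \<longrightarrow> \<delta> + (1 - \<delta>) * 2 powr (- F * s) < 2 powr (- F * s * c)"
proof -
  define \<phi> where "\<phi> s = exp (- F * s * c * ln 2) - \<delta> - (1 - \<delta>) * exp (- F * s * ln 2)" for s :: real
  have "DERIV \<phi> 0 :> F * ln 2 * (1 - \<delta> - c)"
    unfolding \<phi>_def by (auto intro!: derivative_eq_intros simp: algebra_simps)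
  moreover have "0 < F * ln 2 * (1 - \<delta> - c)" using assms by simp
  ultimately obtain d where d: "d > 0" "\<And>h. h > 0 \<Longrightarrow> h < d \<Longrightarrow> \<phi> 0 < \<phi> (0 + h)"
    using DERIV_pos_inc_right by blast
  have "\<phi> 0 = 0" unfolding \<phi>_def by simp
  have p: "2 powr y = exp (y * ln 2)" for y :: real by (simp add: powr_def)
  show ?thesis
  proof (intro exI[of _ d] conjI allI impI)
    fix s assume "0 < s \<and> s < d"
    then have "\<phi> 0 < \<phi> s" using d(2)[of s] by simp
    then show "\<delta> + (1 - \<delta>) * 2 powr (- F * s) < 2 powr (- F * s * c)"
      using \<open>\<phi> 0 = 0\<close> unfolding \<phi>_def p by (simp add: mult_ac)
  qed (use d in auto)
qed

text \<open>The error exponent of one block: if \<open>2\<^sup>B\<close> bounds the number of competitors and the block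
  has \<open>l \<ge> B (1 + \<eta>) / (F (1 - \<delta>))\<close> uses, then the slack between \<open>1 + \<eta>\<close> and \<open>1 + \<eta>/2\<close> leaves
  the exponent \<open>\<eta> / (2 + \<eta>)\<close> per bit.\<close>
lemma powr_mult_erasure_power_le:
  fixes \<delta> s F \<eta> X B a :: real and l :: nat
  assumes d: "0 \<le> \<delta>" "\<delta> < 1" and s: "0 < s" "s \<le> 1" and F: "0 < F" and eta: "0 < \<eta>"
    and a: "a = \<delta> + (1 - \<delta>) * 2 powr (- F * s)"
    and ab: "a \<le> 2 powr (- F * s * ((1 - \<delta>) / (1 + \<eta>/2)))"
    and X: "0 \<le> X" "X \<le> 2 powr B" and B: "0 \<le> B"
    and l: "B * (1 + \<eta>) / (F * (1 - \<delta>)) \<le> real l"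
  shows "X powr s * a ^ l \<le> 2 powr (- s * B * (\<eta> / (2 + \<eta>)))"
proof -
  define r where "r = B * (1 + \<eta>) / (F * (1 - \<delta>))"
  have r0: "0 \<le> r" unfolding r_def using B F d eta by auto
  have t1: "X powr s \<le> 2 powr (B * s)"
    using powr_mono2[of s X "2 powr B"] X s by (simp add: powr_powr)
  have e1: "2 powr (- F * s) \<le> 1"
    using powr_mono[of "- F * s" 0 2] F s by simp
  have apos: "0 < a"
    using a d by (cases "\<delta> = 0") (auto intro: add_pos_nonneg)
  have "(1 - \<delta>) * 2 powr (- F * s) \<le> (1 - \<delta>) * 1" using d e1 by (intro mult_left_mono) auto
  then have a1: "a \<le> 1" using a by simp
  have "a ^ l = a powr real l" using apos by (simp add: powr_realpow)
  also have "\<dots> \<le> a powr r" using apos a1 l unfolding r_def by (intro powr_mono') auto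
  also have "\<dots> \<le> (2 powr (- F * s * ((1 - \<delta>) / (1 + \<eta>/2)))) powr r"
    using apos ab r0 by (intro powr_mono2) auto
  also have "\<dots> = 2 powr (- s * B * (1 + \<eta>) / (1 + \<eta>/2))"
    unfolding powr_powr r_def using F d eta by (simp add: mult.assoc)
  finally have t2: "a ^ l \<le> 2 powr (- s * B * (1 + \<eta>) / (1 + \<eta>/2))" .
  have "X powr s * a ^ l \<le> 2 powr (B * s) * 2 powr (- s * B * (1 + \<eta>) / (1 + \<eta>/2))"
    using t1 t2 apos by (intro mult_mono) auto
  also have "\<dots> = 2 powr (B * s - s * B * (1 + \<eta>) / (1 + \<eta>/2))" by (simp add: powr_add[symmetric])
  also have "B * s - s * B * (1 + \<eta>) / (1 + \<eta>/2) = - s * B * (\<eta> / (2 + \<eta>))"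
    using eta by (simp add: field_simps)
  finally show ?thesis .
qed

lemma LIMSEQ_powr_neg_mult:
  fixes a C :: real
  assumes "0 < a"
  shows "(\<lambda>n::nat. C * 2 powr (- a * real n)) \<longlonglongrightarrow> 0"
proof -
  have eq: "2 powr (- a * real n) = (2 powr (- a)) ^ n" for n
    by (simp add: powr_realpow[symmetric] powr_powr)
  have "2 powr (- a) < 1" using powr_less_mono[of "- a" 0 2] assms by simp
  then have "(\<lambda>n. (2 powr (- a)) ^ n) \<longlonglongrightarrow> 0" by (intro LIMSEQ_power_zero) simp
  then show ?thesis unfolding eq using tendsto_mult_right_zero by blast
qed

lemma eventually_le_mult_real:
  fixes a c :: real
  assumes "0 < a"
  shows "eventually (\<lambda>n. c \<le> a * real n) sequentially"
proof -
  obtain N :: nat where N: "c / a < real N" using reals_Archimedean2 by blast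
  show ?thesis
  proof (rule eventually_sequentiallyI[of N])
    fix n assume "N \<le> n"
    then have "c / a < real n" using N by linarith
    then show "c \<le> a * real n" using assms by (simp add: field_simps)
  qed
qed

lemma ereal_le_if_scaled_le:
  fixes L :: real and C :: ereal
  assumes L: "0 < L" and le: "\<And>\<eta>. 0 < \<eta> \<Longrightarrow> \<eta> < 1/2 \<Longrightarrow> ereal ((1 - 2 * \<eta>) * L) \<le> C"
  shows "ereal L \<le> C"
proof (rule dense_le)
  fix x assume x: "x < ereal L"
  show "x \<le> C"
  proof (cases x)
    case (real c)
    define \<eta> where "\<eta> = min (1/4) ((L - c) / (4 * L))"
    have "0 < \<eta>" "\<eta> < 1/2" using x L real by (auto simp: \<eta>_def)
    moreover have "c \<le> (1 - 2 * \<eta>) * L"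
    proof -
      have "\<eta> * L \<le> (L - c) / 4" using L by (simp add: \<eta>_def min_def field_simps)
      moreover have "0 \<le> \<eta> * L" using \<open>0 < \<eta>\<close> L by simp
      ultimately show ?thesis by (simp add: algebra_simps)
    qed
    ultimately show ?thesis using le[of \<eta>] real by (metis ereal_less_eq(3) order.trans)
  qed (use x in auto)
qed

lemma num_msgs_le_power:
  assumes "real n * R \<le> real k"
  shows "num_msgs n R \<le> 2 ^ k"
proof -
  have "real (num_msgs n R) \<le> 2 powr (real n * R)" unfolding num_msgs_def by (simp add: of_nat_nat)
  also have "\<dots> \<le> 2 powr real k" using assms by simp
  also have "\<dots> = real (2 ^ k)" by (simp add: powr_realpow)
  finally show ?thesis by (simp only: of_nat_le_iff)
qed

lemma power_le_num_msgs:
  assumes "real k \<le> real n * M"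
  shows "2 ^ k \<le> num_msgs n M"
proof -
  have "(2::real) ^ k \<le> 2 powr (real n * M)"
    using assms by (simp add: powr_realpow[symmetric])
  then have "(2::int) ^ k \<le> \<lfloor>2 powr (real n * M)\<rfloor>"
    using floor_mono by fastforce
  then show ?thesis unfolding num_msgs_def by (simp add: nat_le_iff nat_power_eq)
qed

section \<open>Random coding for one delivery phase\<close>

text \<open>One delivery phase for the demand vector \<open>dd\<close>. It consists of parts \<open>j \<in> J\<close>: part \<open>j\<close> is a
  tuple \<open>msg j w\<close> of symbols below \<open>Q j\<close>, one entry per recipient in \<open>Sr j\<close>, sent during the
  channel uses \<open>I j\<close> through a codebook that maps each possible tuple to a channel symbol. A
  recipient \<open>k\<close> learns all entries but its own from its cache (\<open>side\<close>) and recovers its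
  demanded message from its own entries (\<open>recon\<close>); strong receivers have cache \<open>0\<close>.\<close>
locale slotted_scheme =
  fixes Kw Ks D :: nat and dw ds R :: real and E :: "nat set pmf" and n F :: nat
    and g :: "nat \<Rightarrow> (nat\<Rightarrow>nat) \<Rightarrow> nat" and dd :: "nat \<Rightarrow> nat"
    and J :: "'j set" and Sr :: "'j \<Rightarrow> nat set" and Q :: "'j \<Rightarrow> nat" and I :: "'j \<Rightarrow> nat set"
    and msg :: "'j \<Rightarrow> (nat\<Rightarrow>nat) \<Rightarrow> (nat\<Rightarrow>nat)" and side :: "'j \<Rightarrow> nat \<Rightarrow> nat \<Rightarrow> (nat\<Rightarrow>nat)"
    and recon :: "nat \<Rightarrow> nat \<Rightarrow> ('j \<Rightarrow> nat) \<Rightarrow> nat"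
  assumes law: "valid_erasure_law Kw Ks dw ds E"
    and finJ: "finite J" and finS: "\<And>j. j \<in> J \<Longrightarrow> finite (Sr j)"
    and Isub: "\<And>j. j \<in> J \<Longrightarrow> I j \<subseteq> {0..<n}"
    and Idisj: "\<And>j1 j2. j1 \<in> J \<Longrightarrow> j2 \<in> J \<Longrightarrow> j1 \<noteq> j2 \<Longrightarrow> I j1 \<inter> I j2 = {}"
    and msgP: "\<And>j w. j \<in> J \<Longrightarrow> w \<in> msg_set D n R \<Longrightarrow> msg j w \<in> PiE (Sr j) (\<lambda>_. {..<Q j})"
    and sideP: "\<And>j k w. j \<in> J \<Longrightarrow> k \<in> Sr j \<Longrightarrow> w \<in> msg_set D n R \<Longrightarrow>
        (side j k (if k \<le> Kw then g k w else 0))(k := msg j w k) = msg j w"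
    and reconP: "\<And>k w. k \<in> {1..Kw+Ks} \<Longrightarrow> w \<in> msg_set D n R \<Longrightarrow>
        recon k (if k \<le> Kw then g k w else 0) (\<lambda>j. if j \<in> J \<and> k \<in> Sr j then msg j w k else 0) = w (dd k)"
begin

abbreviation "W \<equiv> msg_set D n R"
abbreviation "K \<equiv> Kw + Ks"
definition "Bits = {xs :: bool list. length xs = F}"
definition "part_of t = (THE j. j \<in> J \<and> t \<in> I j)"
definition "slot_inputs t = (if \<exists>j\<in>J. t \<in> I j then PiE (Sr (part_of t)) (\<lambda>_. {..<Q (part_of t)}) else {})"
definition "codebooks = PiE {0..<n} (\<lambda>t. PiE (slot_inputs t) (\<lambda>_. Bits))"
definition "encoder h w t = (if t < n \<and> (\<exists>j\<in>J. t \<in> I j) then h t (msg (part_of t) w) else replicate F False)"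
definition "consistent h k v y j r = (\<forall>t\<in>I j. y t \<noteq> None \<longrightarrow> y t = Some (h t ((side j k v)(k := r))))"
definition "decode_part h k v y j = (if \<exists>!r. r < Q j \<and> consistent h k v y j r then THE r. r < Q j \<and> consistent h k v y j r else 0)"
definition "decoder h k y v = recon k v (\<lambda>j. if j \<in> J \<and> k \<in> Sr j then decode_part h k v y j else 0)"
definition "confusable h j k w e r = (\<forall>t\<in>I j. k \<notin> e t \<longrightarrow> h t ((msg j w)(k := r)) = h t (msg j w))"

lemma part_of_eq: "j \<in> J \<Longrightarrow> t \<in> I j \<Longrightarrow> part_of t = j"
  unfolding part_of_def using Idisj by (intro the_equality) blast+

lemma slot_inputs_eq: "j \<in> J \<Longrightarrow> t \<in> I j \<Longrightarrow> slot_inputs t = PiE (Sr j) (\<lambda>_. {..<Q j})"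
  unfolding slot_inputs_def using part_of_eq by auto

lemma finite_slot_inputs: "finite (slot_inputs t)"
proof (cases "\<exists>j\<in>J. t \<in> I j")
  case True
  then obtain j where "j \<in> J" "t \<in> I j" by blast
  then show ?thesis using slot_inputs_eq finS by (auto intro!: finite_PiE)
qed (simp add: slot_inputs_def)

lemma finite_Bits: "finite Bits"
  unfolding Bits_def using finite_lists_length_eq[of "UNIV :: bool set" F] by simp

lemma card_Bits: "card Bits = 2 ^ F"
  unfolding Bits_def using card_lists_length_eq[of "UNIV :: bool set" F] by simp

lemma length_encoder: "h \<in> codebooks \<Longrightarrow> w \<in> W \<Longrightarrow> t < n \<Longrightarrow> length (encoder h w t) = F"
proof -
  assume h: "h \<in> codebooks" and w: "w \<in> W" and t: "t < n"
  show ?thesis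
  proof (cases "\<exists>j\<in>J. t \<in> I j")
    case True
    then obtain j where j: "j \<in> J" "t \<in> I j" by blast
    have "msg j w \<in> slot_inputs t" using slot_inputs_eq[OF j] msgP[OF j(1) w] by simp
    moreover have "h t \<in> PiE (slot_inputs t) (\<lambda>_. Bits)" using h t unfolding codebooks_def by auto
    ultimately have "h t (msg j w) \<in> Bits" by auto
    then show ?thesis using True t part_of_eq[OF j] j unfolding encoder_def Bits_def by auto
  qed (simp add: encoder_def)
qed

lemma consistent_iff_confusable:
  assumes j: "j \<in> J" and k: "k \<in> Sr j" and w: "w \<in> W"
  shows "consistent h k (if k \<le> Kw then g k w else 0) (channel_out n e (encoder h w) k) j r
     \<longleftrightarrow> confusable h j k w e r"
proof -
  have s: "(side j k (if k \<le> Kw then g k w else 0))(k := r) = (msg j w)(k := r)"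
    using sideP[OF j k w] by (metis fun_upd_upd)
  have "\<And>t. t \<in> I j \<Longrightarrow> t < n \<and> encoder h w t = h t (msg j w)"
    using Isub[OF j] part_of_eq[OF j] j unfolding encoder_def by auto
  then show ?thesis unfolding consistent_def confusable_def channel_out_def s by auto
qed

lemma decode_part_correct:
  assumes j: "j \<in> J" and k: "k \<in> Sr j" and w: "w \<in> W"
    and no: "\<forall>r\<in>{..<Q j} - {msg j w k}. \<not> confusable h j k w e r"
  shows "decode_part h k (if k \<le> Kw then g k w else 0) (channel_out n e (encoder h w) k) j = msg j w k"
proof -
  let ?ok = "consistent h k (if k \<le> Kw then g k w else 0) (channel_out n e (encoder h w) k) j"
  have r0: "msg j w k < Q j" using msgP[OF j w] k by auto
  have a0: "confusable h j k w e (msg j w k)" unfolding confusable_def by simp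
  have u: "\<exists>!r. r < Q j \<and> ?ok r"
    using r0 a0 no consistent_iff_confusable[OF j k w] by blast
  then have "(THE r. r < Q j \<and> ?ok r) = msg j w k"
    using r0 a0 consistent_iff_confusable[OF j k w] by (intro the1_equality) auto
  then show ?thesis using u unfolding decode_part_def by simp
qed

text \<open>Union bound: receiver \<open>k\<close> can only err if, in some part it receives, a wrong candidate
  is confusable with its true entry.\<close>
lemma decoding_error_le:
  assumes w: "w \<in> W"
  shows "(if \<exists>k\<in>{1..K}. decoder h k (channel_out n e (encoder h w) k) (if k \<le> Kw then g k w else 0) \<noteq> w (dd k) then 1 else 0)
    \<le> (\<Sum>k\<in>{1..K}. \<Sum>j\<in>{j\<in>J. k \<in> Sr j}. min 1 (\<Sum>r\<in>{..<Q j} - {msg j w k}. if confusable h j k w e r then 1 else (0::real)))"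
    (is "?L \<le> ?R")
proof (cases "\<exists>k\<in>{1..K}. decoder h k (channel_out n e (encoder h w) k) (if k \<le> Kw then g k w else 0) \<noteq> w (dd k)")
  case False
  then have "?L = 0" by simp
  also have "0 \<le> ?R" by (intro sum_nonneg) (auto intro!: sum_nonneg split: if_splits)
  finally show ?thesis .
next
  case True
  then obtain k where k: "k \<in> {1..K}" and bad: "decoder h k (channel_out n e (encoder h w) k) (if k \<le> Kw then g k w else 0) \<noteq> w (dd k)"
    by blast
  have "\<exists>j\<in>J. k \<in> Sr j \<and> (\<exists>r\<in>{..<Q j} - {msg j w k}. confusable h j k w e r)"
  proof (rule ccontr)
    assume "\<not> ?thesis"
    then have "\<And>j. j \<in> J \<Longrightarrow> k \<in> Sr j \<Longrightarrow> decode_part h k (if k \<le> Kw then g k w else 0) (channel_out n e (encoder h w) k) j = msg j w k"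
      using decode_part_correct[OF _ _ w] by blast
    then have "(\<lambda>j. if j \<in> J \<and> k \<in> Sr j then decode_part h k (if k \<le> Kw then g k w else 0) (channel_out n e (encoder h w) k) j else 0)
      = (\<lambda>j. if j \<in> J \<and> k \<in> Sr j then msg j w k else 0)" by auto
    then show False using bad reconP[OF k w] unfolding decoder_def by simp
  qed
  then obtain j r where j: "j \<in> J" "k \<in> Sr j" and r: "r \<in> {..<Q j} - {msg j w k}" and ag: "confusable h j k w e r"
    by blast
  have fin: "finite ({..<Q j} - {msg j w k})" by simp
  have "1 \<le> (\<Sum>r\<in>{..<Q j} - {msg j w k}. if confusable h j k w e r then 1 else (0::real))"
    using member_le_sum[OF r, of "\<lambda>r. if confusable h j k w e r then 1 else (0::real)"] ag fin by auto
  then have "1 \<le> min 1 (\<Sum>r\<in>{..<Q j} - {msg j w k}. if confusable h j k w e r then 1 else (0::real))" by simp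
  also have "\<dots> \<le> (\<Sum>j\<in>{j\<in>J. k \<in> Sr j}. min 1 (\<Sum>r\<in>{..<Q j} - {msg j w k}. if confusable h j k w e r then 1 else (0::real)))"
    using j finJ by (intro member_le_sum) (auto intro!: sum_nonneg split: if_splits)
  also have "\<dots> \<le> ?R"
    using k finJ by (intro member_le_sum) (auto intro!: sum_nonneg split: if_splits)
  finally show ?thesis by simp
qed

lemma finite_codebooks: "finite codebooks"
  unfolding codebooks_def using finite_slot_inputs finite_Bits by (auto intro!: finite_PiE)

lemma codebooks_nonempty: "codebooks \<noteq> {}"
proof -
  have "Bits \<noteq> {}" unfolding Bits_def by (auto intro: exI[of _ "replicate F False"])
  then show ?thesis unfolding codebooks_def by (simp add: PiE_eq_empty_iff)
qed

lemma card_slot_inputs_agree: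
  assumes "a \<in> slot_inputs t" "b \<in> slot_inputs t" "a \<noteq> b"
  shows "real (card {\<phi>\<in>PiE (slot_inputs t) (\<lambda>_. Bits). \<phi> a = \<phi> b})
       = real (card (PiE (slot_inputs t) (\<lambda>_. Bits))) * (1 / 2 ^ F)"
proof -
  have "card {\<phi>\<in>PiE (slot_inputs t) (\<lambda>_. Bits). \<phi> a = \<phi> b} * 2 ^ F = card (PiE (slot_inputs t) (\<lambda>_. Bits))"
    using card_PiE_agree[OF finite_slot_inputs finite_Bits assms] by (simp add: card_Bits)
  from arg_cong[of _ _ real, OF this] show ?thesis by (simp add: field_simps)
qed

text \<open>The slots of a codebook are chosen independently, and at each unerased slot of part \<open>j\<close> the
  two tuples collide for a fraction \<open>1 / 2 ^ F\<close> of the choices.\<close>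
lemma card_confusable_codebooks:
  assumes j: "j \<in> J" and k: "k \<in> Sr j" and w: "w \<in> W" and r: "r \<in> {..<Q j} - {msg j w k}"
  shows "real (card {h\<in>codebooks. confusable h j k w e r}) = real (card codebooks) * (1 / 2 ^ F) ^ card {t\<in>I j. k \<notin> e t}"
proof -
  let ?P = "{t\<in>I j. k \<notin> e t}"
  let ?a = "(msg j w)(k := r)" and ?b = "msg j w"
  define c where "c t = (if t \<in> ?P then {\<phi>\<in>PiE (slot_inputs t) (\<lambda>_. Bits). \<phi> ?a = \<phi> ?b} else PiE (slot_inputs t) (\<lambda>_. Bits))" for t
  have PI: "?P \<subseteq> {0..<n}" using Isub[OF j] by auto
  have cmem: "h t \<in> c t \<longleftrightarrow> h t \<in> PiE (slot_inputs t) (\<lambda>_. Bits) \<and> (t \<in> ?P \<longrightarrow> h t ?a = h t ?b)" for h t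
    by (auto simp: c_def)
  have eq: "{h\<in>codebooks. confusable h j k w e r} = PiE {0..<n} c"
  proof (rule set_eqI)
    fix h
    have "h \<in> PiE {0..<n} c \<longleftrightarrow> (\<forall>t\<in>{0..<n}. h t \<in> c t) \<and> h \<in> extensional {0..<n}"
      by (simp only: PiE_iff)
    also have "\<dots> \<longleftrightarrow> ((\<forall>t\<in>{0..<n}. h t \<in> PiE (slot_inputs t) (\<lambda>_. Bits)) \<and> h \<in> extensional {0..<n}) \<and> (\<forall>t\<in>{0..<n}. t \<in> ?P \<longrightarrow> h t ?a = h t ?b)"
      unfolding cmem by blast
    also have "\<dots> \<longleftrightarrow> h \<in> codebooks \<and> confusable h j k w e r"
      unfolding codebooks_def confusable_def PiE_iff[of h] using PI by auto
    finally show "h \<in> {h\<in>codebooks. confusable h j k w e r} \<longleftrightarrow> h \<in> PiE {0..<n} c" by simp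
  qed
  have inU: "t \<in> ?P \<Longrightarrow> ?a \<in> slot_inputs t \<and> ?b \<in> slot_inputs t" for t
    using slot_inputs_eq[OF j] msgP[OF j w] r k by (auto simp: PiE_iff extensional_def)
  have ab: "?a \<noteq> ?b" using r by (auto simp: fun_eq_iff)
  have cc: "real (card (c t)) = (if t \<in> ?P then real (card (PiE (slot_inputs t) (\<lambda>_. Bits))) * (1 / 2 ^ F) else real (card (PiE (slot_inputs t) (\<lambda>_. Bits))))" for t
  proof (cases "t \<in> ?P")
    case True
    then show ?thesis using card_slot_inputs_agree[OF _ _ ab] inU[OF True] unfolding c_def by simp
  next
    case False
    then have "c t = PiE (slot_inputs t) (\<lambda>_. Bits)" unfolding c_def by meson
    then show ?thesis using False by auto
  qed
  have "real (card {h\<in>codebooks. confusable h j k w e r}) = (\<Prod>t\<in>{0..<n}. real (card (c t)))"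
    unfolding eq by (simp add: card_PiE)
  also have "\<dots> = (\<Prod>t\<in>{0..<n}. real (card (PiE (slot_inputs t) (\<lambda>_. Bits))) * (if t \<in> ?P then 1 / 2 ^ F else 1))"
    by (intro prod.cong) (auto simp: cc)
  also have "\<dots> = real (card codebooks) * (\<Prod>t\<in>{0..<n}. if t \<in> ?P then 1 / 2 ^ F else 1)"
    unfolding codebooks_def by (simp add: prod.distrib card_PiE)
  also have "(\<Prod>t\<in>{0..<n}. if t \<in> ?P then (1::real) / 2 ^ F else 1) = (1 / 2 ^ F) ^ card ?P"
  proof -
    have "{t\<in>{0..<n}. t \<in> ?P} = ?P" using PI by auto
    then show ?thesis using prod.inter_filter[of "{0..<n}" "\<lambda>_. (1::real) / 2 ^ F" "\<lambda>t. t \<in> ?P"] by simp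
  qed
  finally show ?thesis .
qed

lemma sum_codebooks_min_confusions:
  assumes j: "j \<in> J" and k: "k \<in> Sr j" and w: "w \<in> W" and s: "0 < s" "s \<le> 1"
  shows "(\<Sum>h\<in>codebooks. min 1 (\<Sum>r\<in>{..<Q j} - {msg j w k}. if confusable h j k w e r then 1 else (0::real)))
     \<le> real (card codebooks) * ((real (Q j) - 1) powr s * (\<Prod>t\<in>I j. if k \<in> e t then 1 else 2 powr (- real F * s)))"
proof -
  let ?X = "\<lambda>h. \<Sum>r\<in>{..<Q j} - {msg j w k}. if confusable h j k w e r then 1 else (0::real)"
  let ?c = "card {t\<in>I j. k \<notin> e t}"
  have m: "msg j w k < Q j" using msgP[OF j w] k by auto
  have "(\<Sum>h\<in>codebooks. ?X h) = (\<Sum>r\<in>{..<Q j} - {msg j w k}. real (card {h\<in>codebooks. confusable h j k w e r}))"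
    using finite_codebooks by (subst sum.swap) (simp add: sum.If_cases Int_def)
  also have "\<dots> = (\<Sum>r\<in>{..<Q j} - {msg j w k}. real (card codebooks) * (1 / 2 ^ F) ^ ?c)"
    using card_confusable_codebooks[OF j k w] by simp
  also have "\<dots> = real (card codebooks) * ((real (Q j) - 1) * (1 / 2 ^ F) ^ ?c)"
    using m by (simp add: of_nat_diff)
  finally have sX: "(\<Sum>h\<in>codebooks. ?X h) = real (card codebooks) * ((real (Q j) - 1) * (1 / 2 ^ F) ^ ?c)" .
  have "(\<Sum>h\<in>codebooks. min 1 (?X h)) \<le> min (\<Sum>h\<in>codebooks. 1) (\<Sum>h\<in>codebooks. ?X h)"
    by (intro min.boundedI sum_mono) auto
  also have "\<dots> = real (card codebooks) * min 1 ((real (Q j) - 1) * (1 / 2 ^ F) ^ ?c)"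
    unfolding sX by (simp add: min_mult_distrib_left)
  also have "\<dots> \<le> real (card codebooks) * (((real (Q j) - 1) * (1 / 2 ^ F) ^ ?c) powr s)"
    using m s by (intro mult_left_mono min_1_le_powr) auto
  also have "((real (Q j) - 1) * (1 / 2 ^ F) ^ ?c) powr s = (real (Q j) - 1) powr s * (2 powr (- real F * s)) ^ ?c"
    using m by (intro powr_mult_inverse_power) simp
  also have "(2 powr (- real F * s)) ^ ?c = (\<Prod>t\<in>I j. if k \<in> e t then 1 else 2 powr (- real F * s))"
    using Isub[OF j] by (simp add: prod_if_1_eq_power finite_subset)
  finally show ?thesis .
qed

definition "confusion_bound s e = (\<Sum>k\<in>{1..K}. \<Sum>j\<in>{j\<in>J. k \<in> Sr j}. (real (Q j) - 1) powr s *
   (\<Prod>t\<in>I j. if k \<in> e t then 1 else 2 powr (- real F * s)))"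

definition "error_bound s = (\<Sum>k\<in>{1..K}. \<Sum>j\<in>{j\<in>J. k \<in> Sr j}. (real (Q j) - 1) powr s *
   (erasure_prob Kw dw ds k + (1 - erasure_prob Kw dw ds k) * 2 powr (- real F * s)) ^ card (I j))"

lemma sum_codebooks_decoding_error_le:
  assumes w: "w \<in> W" and s: "0 < s" "s \<le> 1"
  shows "(\<Sum>h\<in>codebooks. if \<exists>k\<in>{1..K}. decoder h k (channel_out n e (encoder h w) k)
            (if k \<le> Kw then g k w else 0) \<noteq> w (dd k) then 1 else 0)
     \<le> real (card codebooks) * confusion_bound s e"
proof -
  have "(\<Sum>h\<in>codebooks. if \<exists>k\<in>{1..K}. decoder h k (channel_out n e (encoder h w) k)
            (if k \<le> Kw then g k w else 0) \<noteq> w (dd k) then 1 else 0)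
      \<le> (\<Sum>h\<in>codebooks. \<Sum>k\<in>{1..K}. \<Sum>j\<in>{j\<in>J. k \<in> Sr j}.
         min 1 (\<Sum>r\<in>{..<Q j} - {msg j w k}. if confusable h j k w e r then 1 else (0::real)))"
    by (intro sum_mono decoding_error_le[OF w])
  also have "\<dots> = (\<Sum>k\<in>{1..K}. \<Sum>j\<in>{j\<in>J. k \<in> Sr j}. \<Sum>h\<in>codebooks.
         min 1 (\<Sum>r\<in>{..<Q j} - {msg j w k}. if confusable h j k w e r then 1 else (0::real)))"
    by (simp add: sum.swap[of _ codebooks])
  also have "\<dots> \<le> (\<Sum>k\<in>{1..K}. \<Sum>j\<in>{j\<in>J. k \<in> Sr j}. real (card codebooks) * ((real (Q j) - 1) powr s *
       (\<Prod>t\<in>I j. if k \<in> e t then 1 else 2 powr (- real F * s))))"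
    using s by (intro sum_mono sum_codebooks_min_confusions[OF _ _ w]) auto
  also have "\<dots> = real (card codebooks) * confusion_bound s e"
    unfolding confusion_bound_def by (simp add: sum_distrib_left)
  finally show ?thesis .
qed

lemma expected_confusion_bound:
  "(\<Sum>e\<in>PiE {0..<n} (\<lambda>_. Pow {1..K}). (\<Prod>t<n. pmf E (e t)) * confusion_bound s e) = error_bound s"
proof -
  define Es where "Es = PiE {0..<n} (\<lambda>_. Pow {1..K})"
  define P where "P e = (\<Prod>t<n. pmf E (e t))" for e :: "nat \<Rightarrow> nat set"
  define f where "f k j e = (\<Prod>t\<in>I j. if k \<in> e t then 1 else 2 powr (- real F * s))"
    for k j and e :: "nat \<Rightarrow> nat set"
  have "(\<Sum>e\<in>Es. P e * confusion_bound s e)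
      = (\<Sum>k\<in>{1..K}. \<Sum>e\<in>Es. \<Sum>j\<in>{j\<in>J. k \<in> Sr j}. P e * ((real (Q j) - 1) powr s * f k j e))"
    unfolding confusion_bound_def sum_distrib_left f_def by (rule sum.swap)
  also have "\<dots> = (\<Sum>k\<in>{1..K}. \<Sum>j\<in>{j\<in>J. k \<in> Sr j}. \<Sum>e\<in>Es. P e * ((real (Q j) - 1) powr s * f k j e))"
    by (intro sum.cong refl sum.swap)
  also have "\<dots> = (\<Sum>k\<in>{1..K}. \<Sum>j\<in>{j\<in>J. k \<in> Sr j}. (real (Q j) - 1) powr s * (\<Sum>e\<in>Es. P e * f k j e))"
    by (simp add: sum_distrib_left mult.left_commute)
  also have "\<dots> = error_bound s"
    unfolding error_bound_def Es_def P_def f_def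
    by (intro sum.cong refl arg_cong2[where f="(*)"] valid_erasure_law_sum_prod[OF law]) (auto dest: Isub)
  finally show ?thesis unfolding Es_def P_def .
qed

lemma error_bound_nonneg: "0 \<le> error_bound s"
  unfolding expected_confusion_bound[symmetric] confusion_bound_def
  by (intro sum_nonneg mult_nonneg_nonneg prod_nonneg) auto

lemma sum_codebooks_error_prob_le:
  assumes s: "0 < s" "s \<le> 1"
  shows "(\<Sum>h\<in>codebooks. error_prob Kw Ks D E n R g (\<lambda>_. encoder h) (\<lambda>_. decoder h) dd)
     \<le> real (card codebooks) * error_bound s"
proof -
  define Es where "Es = PiE {0..<n} (\<lambda>_. Pow {1..K})"
  define P where "P e = (\<Prod>t<n. pmf E (e t))" for e :: "nat \<Rightarrow> nat set"
  define err where "err h w e = (if \<exists>k\<in>{1..K}. decoder h k (channel_out n e (encoder h w) k)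
      (if k \<le> Kw then g k w else 0) \<noteq> w (dd k) then 1 else (0::real))" for h w e
  have P: "0 \<le> P e" for e unfolding P_def by (auto intro!: prod_nonneg)
  have "(\<Sum>h\<in>codebooks. error_prob Kw Ks D E n R g (\<lambda>_. encoder h) (\<lambda>_. decoder h) dd)
      = (\<Sum>w\<in>W. \<Sum>e\<in>Es. P e * (\<Sum>h\<in>codebooks. err h w e)) / real (card W)"
    unfolding error_prob_def Es_def P_def err_def
    by (simp add: sum_divide_distrib[symmetric] sum_distrib_left sum.swap[of _ codebooks])
  also have "\<dots> \<le> (\<Sum>w\<in>W. \<Sum>e\<in>Es. P e * (real (card codebooks) * confusion_bound s e)) / real (card W)"
    using sum_codebooks_decoding_error_le[OF _ s] P unfolding err_def
    by (intro divide_right_mono sum_mono mult_left_mono) auto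
  also have "\<dots> = real (card codebooks) * (real (card W) * error_bound s) / real (card W)"
  proof -
    have "(\<Sum>e\<in>Es. P e * (real (card codebooks) * confusion_bound s e)) = real (card codebooks) * error_bound s"
      unfolding expected_confusion_bound[of s, symmetric] Es_def P_def sum_distrib_left
      by (simp add: mult.left_commute)
    then show ?thesis by simp
  qed
  also have "\<dots> \<le> real (card codebooks) * error_bound s"
    using error_bound_nonneg[of s] by (cases "card W = 0") (auto simp: mult_ac)
  finally show ?thesis .
qed

lemma exists_good_codebook:
  assumes s: "0 < s" "s \<le> 1"
  shows "\<exists>fd phid. (\<forall>w\<in>W. \<forall>t<n. length (fd w t) = F) \<and>
     error_prob Kw Ks D E n R g (\<lambda>_. fd) (\<lambda>_. phid) dd \<le> error_bound s"
proof -
  obtain h where "h \<in> codebooks"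
    "error_prob Kw Ks D E n R g (\<lambda>_. encoder h) (\<lambda>_. decoder h) dd \<le> error_bound s"
    using exists_le_average[OF finite_codebooks codebooks_nonempty sum_codebooks_error_prob_le[OF s]]
    by blast
  then show ?thesis using length_encoder by blast
qed

end

section \<open>Placement and separate delivery\<close>

text \<open>The Maddah-Ali--Niesen placement with separate delivery. \<open>enc x T\<close> is the subfile of
  message \<open>x\<close> indexed by the set \<open>T\<close> of weak receivers, of \<open>b |T|\<close> bits; weak receiver \<open>i\<close>
  stores the subfiles with \<open>i \<in> T\<close> of all files, encoded by \<open>cenc i\<close> into its cache index.
  The delivery part \<open>Inl S\<close> carries \<open>enc (w (d k)) (S - {k})\<close> to each \<open>k \<in> S\<close> during
  \<open>lw (|S| - 1)\<close> channel uses; the part \<open>Inr j\<close> carries the whole demanded message of the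
  strong receiver \<open>j\<close> during \<open>ls\<close> channel uses.\<close>
locale coded_caching_scheme =
  fixes Kw Ks D :: nat and dw ds R M :: real and E :: "nat set pmf" and n F :: nat
    and b :: "nat \<Rightarrow> nat" and lw :: "nat \<Rightarrow> nat" and ls :: nat
    and enc :: "nat \<Rightarrow> nat set \<Rightarrow> nat" and cenc :: "nat \<Rightarrow> (nat \<times> nat set \<Rightarrow> nat) \<Rightarrow> nat"
  assumes law: "valid_erasure_law Kw Ks dw ds E"
    and enc_mem: "\<And>x. x \<in> {1..num_msgs n R} \<Longrightarrow> enc x \<in> PiE (Pow {1..Kw}) (\<lambda>T. {..<2 ^ b (card T)})"
    and enc_inj: "inj_on enc {1..num_msgs n R}"
    and cenc_image: "\<And>i. i \<in> {1..Kw} \<Longrightarrow> cenc i ` PiE ({1..D} \<times> {T\<in>Pow {1..Kw}. i \<in> T}) (\<lambda>(d', T). {..<2 ^ b (card T)}) \<subseteq> {1..num_msgs n M}"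
    and cenc_inj: "\<And>i. i \<in> {1..Kw} \<Longrightarrow> inj_on (cenc i) (PiE ({1..D} \<times> {T\<in>Pow {1..Kw}. i \<in> T}) (\<lambda>(d', T). {..<2 ^ b (card T)}))"
    and slots_fit: "(\<Sum>S\<in>{S\<in>Pow {1..Kw}. S \<noteq> {}}. lw (card S - 1)) + Ks * ls \<le> n"
begin

abbreviation "N \<equiv> num_msgs n R"
abbreviation "W \<equiv> msg_set D n R"
definition "cache_space i = PiE ({1..D} \<times> {T\<in>Pow {1..Kw}. i \<in> T}) (\<lambda>(d', T). {..<2 ^ b (card T)})"
definition "cache_content i (w::nat\<Rightarrow>nat) = restrict (\<lambda>(d'::nat, T::nat set). enc (w d') T) ({1..D} \<times> {T\<in>Pow {1..Kw}. i \<in> T})"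
definition "cache i w = cenc i (cache_content i w)"
definition "cache_decode i v = inv_into (cache_space i) (cenc i) v"
definition "parts = {S\<in>Pow {1..Kw}. S \<noteq> {}} <+> {Kw+1..Kw+Ks}"
definition "recipients (j :: nat set + nat) = (case j of Inl S \<Rightarrow> S | Inr j' \<Rightarrow> {j'})"
definition "alphabet (j :: nat set + nat) = (case j of Inl S \<Rightarrow> 2 ^ b (card S - 1) | Inr j' \<Rightarrow> N + 1)"
definition "slot_len (j :: nat set + nat) = (case j of Inl S \<Rightarrow> lw (card S - 1) | Inr j' \<Rightarrow> ls)"
definition "part_msg d j w = (case j of Inl S \<Rightarrow> restrict (\<lambda>k'. enc (w (d k')) (S - {k'})) S
                                  | Inr j' \<Rightarrow> restrict (\<lambda>_. w (d j')) {j'})"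
definition "side_info d j k v = (case j of Inl S \<Rightarrow> restrict (\<lambda>k'. cache_decode k v (d k', S - {k'})) S
                                    | Inr j' \<Rightarrow> (\<lambda>_. undefined))"
definition "reconstruct d k v dec = (if k \<le> Kw then
     inv_into {1..N} enc (restrict (\<lambda>T. if k \<in> T then cache_decode k v (d k, T) else dec (Inl (insert k T))) (Pow {1..Kw}))
   else dec (Inr k))"

lemma msg_set_mem: "w \<in> W \<Longrightarrow> d' \<in> {1..D} \<Longrightarrow> w d' \<in> {1..N}"
  unfolding msg_set_def by auto

lemma demand_set_mem: "d \<in> demand_set (Kw+Ks) D \<Longrightarrow> k \<in> {1..Kw+Ks} \<Longrightarrow> d k \<in> {1..D}"
  unfolding demand_set_def by auto

lemma cache_content_mem: "w \<in> W \<Longrightarrow> cache_content i w \<in> cache_space i"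
  unfolding cache_content_def cache_space_def using enc_mem msg_set_mem by (auto simp: PiE_iff)

lemma cache_decode_cache:
  assumes i: "i \<in> {1..Kw}" and w: "w \<in> W"
  shows "cache_decode i (cache i w) = cache_content i w"
proof -
  have m: "cache_content i w \<in> cache_space i" by (rule cache_content_mem[OF w])
  have inj: "inj_on (cenc i) (cache_space i)" unfolding cache_space_def by (rule cenc_inj[OF i])
  show ?thesis unfolding cache_decode_def cache_def by (rule inv_into_f_f[OF inj m])
qed

lemma cache_range:
  assumes i: "i \<in> {1..Kw}" and w: "w \<in> W"
  shows "cache i w \<in> {1..num_msgs n M}"
proof -
  have m: "cache_content i w \<in> cache_space i" by (rule cache_content_mem[OF w])
  have "cenc i ` cache_space i \<subseteq> {1..num_msgs n M}" unfolding cache_space_def by (rule cenc_image[OF i])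
  then show ?thesis unfolding cache_def using m by blast
qed

lemma finite_parts: "finite parts" unfolding parts_def by auto

lemma sum_slot_len_le: "(\<Sum>j\<in>parts. slot_len j) \<le> n"
proof -
  have f1: "finite {S\<in>Pow {1..Kw}. S \<noteq> {}}" by simp
  have "(\<Sum>j\<in>parts. slot_len j) = (\<Sum>S\<in>{S\<in>Pow {1..Kw}. S \<noteq> {}}. slot_len (Inl S)) + (\<Sum>j\<in>{Kw+1..Kw+Ks}. slot_len (Inr j))"
    unfolding parts_def using sum.Plus[OF f1 finite_atLeastAtMost, of slot_len "Kw+1" "Kw+Ks"] by (simp add: comp_def)
  also have "\<dots> = (\<Sum>S\<in>{S\<in>Pow {1..Kw}. S \<noteq> {}}. lw (card S - 1)) + Ks * ls"
    by (simp add: slot_len_def)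
  finally show ?thesis using slots_fit by linarith
qed

lemma part_msg_mem:
  assumes d: "d \<in> demand_set (Kw+Ks) D"
  shows "\<And>j w. j \<in> parts \<Longrightarrow> w \<in> W \<Longrightarrow> part_msg d j w \<in> PiE (recipients j) (\<lambda>_. {..<alphabet j})"
proof -
  fix j w assume j: "j \<in> parts" and w: "w \<in> W"
  show "part_msg d j w \<in> PiE (recipients j) (\<lambda>_. {..<alphabet j})"
  proof (cases j)
    case (Inl S)
    have S: "S \<subseteq> {1..Kw}" using j Inl unfolding parts_def by auto
    have "enc (w (d k')) (S - {k'}) < 2 ^ b (card S - 1)" if k': "k' \<in> S" for k'
    proof -
      have "d k' \<in> {1..D}" using demand_set_mem[OF d] S k' by auto
      then have "enc (w (d k')) \<in> PiE (Pow {1..Kw}) (\<lambda>T. {..<2 ^ b (card T)})" using enc_mem msg_set_mem[OF w] by auto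
      moreover have "S - {k'} \<in> Pow {1..Kw}" using S by auto
      ultimately have "enc (w (d k')) (S - {k'}) \<in> {..<2 ^ b (card (S - {k'}))}" by (rule PiE_mem)
      moreover have "card (S - {k'}) = card S - 1" using k' S by (simp add: finite_subset)
      ultimately show ?thesis by simp
    qed
    then show ?thesis using Inl unfolding part_msg_def recipients_def alphabet_def by auto
  next
    case (Inr j')
    have "d j' \<in> {1..D}" using demand_set_mem[OF d] j Inr unfolding parts_def by auto
    then have "w (d j') \<in> {1..N}" by (rule msg_set_mem[OF w])
    then have "w (d j') < N + 1" by simp
    then show ?thesis using Inr unfolding part_msg_def recipients_def alphabet_def by auto
  qed
qed

lemma side_info_part_msg:
  assumes d: "d \<in> demand_set (Kw+Ks) D"
  shows "\<And>j k w. j \<in> parts \<Longrightarrow> k \<in> recipients j \<Longrightarrow> w \<in> W \<Longrightarrow> (side_info d j k (if k \<le> Kw then cache k w else 0))(k := part_msg d j w k) = part_msg d j w"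
proof -
  fix j k w assume j: "j \<in> parts" and k: "k \<in> recipients j" and w: "w \<in> W"
  show "(side_info d j k (if k \<le> Kw then cache k w else 0))(k := part_msg d j w k) = part_msg d j w"
  proof (cases j)
    case (Inl S)
    have S: "S \<subseteq> {1..Kw}" using j Inl unfolding parts_def by auto
    have kS: "k \<in> S" using k Inl unfolding recipients_def by simp
    have kK: "k \<in> {1..Kw}" using kS S by auto
    have c: "cache_decode k (cache k w) (d k', S - {k'}) = enc (w (d k')) (S - {k'})" if "k' \<in> S" "k' \<noteq> k" for k'
    proof -
      have "d k' \<in> {1..D}" using demand_set_mem[OF d] S that by auto
      then have mem: "(d k', S - {k'}) \<in> {1..D} \<times> {T\<in>Pow {1..Kw}. k \<in> T}" using that kS S by auto
      show ?thesis unfolding cache_decode_cache[OF kK w] cache_content_def using mem by simp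
    qed
    show ?thesis
    proof (rule ext)
      fix k'
      show "((side_info d j k (if k \<le> Kw then cache k w else 0))(k := part_msg d j w k)) k' = part_msg d j w k'"
      proof (cases "k' = k")
        case True then show ?thesis by simp
      next
        case False
        have gk: "(if k \<le> Kw then cache k w else 0) = cache k w" using kK by simp
        show ?thesis
        proof (cases "k' \<in> S")
          case True
          then show ?thesis using False c[OF True False] unfolding gk Inl side_info_def part_msg_def by simp
        next
          case nS: False
          then show ?thesis using False unfolding gk Inl side_info_def part_msg_def by simp
        qed
      qed
    qed
  next
    case (Inr j')
    then show ?thesis using k unfolding side_info_def part_msg_def recipients_def by (auto simp: fun_eq_iff)
  qed
qed

lemma reconstruct_part_msg:
  assumes d: "d \<in> demand_set (Kw+Ks) D"
  shows "\<And>k w. k \<in> {1..Kw+Ks} \<Longrightarrow> w \<in> W \<Longrightarrow> reconstruct d k (if k \<le> Kw then cache k w else 0) (\<lambda>j. if j \<in> parts \<and> k \<in> recipients j then part_msg d j w k else 0) = w (d k)"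
proof -
  fix k w assume k: "k \<in> {1..Kw+Ks}" and w: "w \<in> W"
  let ?dec = "\<lambda>j. if j \<in> parts \<and> k \<in> recipients j then part_msg d j w k else 0"
  have dk: "d k \<in> {1..D}" using demand_set_mem[OF d k] .
  show "reconstruct d k (if k \<le> Kw then cache k w else 0) ?dec = w (d k)"
  proof (cases "k \<le> Kw")
    case True
    have kK: "k \<in> {1..Kw}" using k True by auto
    have "restrict (\<lambda>T. if k \<in> T then cache_decode k (cache k w) (d k, T) else ?dec (Inl (insert k T))) (Pow {1..Kw})
        = enc (w (d k))"
    proof (rule ext)
      fix T
      show "restrict (\<lambda>T. if k \<in> T then cache_decode k (cache k w) (d k, T) else ?dec (Inl (insert k T))) (Pow {1..Kw}) T = enc (w (d k)) T"
      proof (cases "T \<in> Pow {1..Kw}")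
        case False
        have "enc (w (d k)) \<in> PiE (Pow {1..Kw}) (\<lambda>T. {..<2 ^ b (card T)})" using enc_mem msg_set_mem[OF w dk] by auto
        then show ?thesis using False by (auto simp: PiE_iff extensional_def)
      next
        case TT: True
        show ?thesis
        proof (cases "k \<in> T")
          case True
          then show ?thesis using TT dk unfolding cache_decode_cache[OF kK w] cache_content_def by auto
        next
          case False
          have "Inl (insert k T) \<in> parts" using TT kK unfolding parts_def by auto
          moreover have "insert k T - {k} = T" using False by auto
          ultimately show ?thesis using TT False unfolding part_msg_def recipients_def by auto
        qed
      qed
    qed
    then show ?thesis using True msg_set_mem[OF w dk] enc_inj unfolding reconstruct_def by simp
  next
    case False
    have "Inr k \<in> parts" using k False unfolding parts_def by auto
    then show ?thesis using False unfolding reconstruct_def part_msg_def recipients_def by simp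
  qed
qed

lemma slotted_scheme_demand:
  assumes d: "d \<in> demand_set (Kw+Ks) D"
    and I1: "\<And>j. j \<in> parts \<Longrightarrow> I j \<subseteq> {0..<n}"
    and I2: "\<And>j1 j2. j1 \<in> parts \<Longrightarrow> j2 \<in> parts \<Longrightarrow> j1 \<noteq> j2 \<Longrightarrow> I j1 \<inter> I j2 = {}"
  shows "slotted_scheme Kw Ks D dw ds R E n cache d parts recipients alphabet I (part_msg d) (side_info d) (reconstruct d)"
proof
  show "valid_erasure_law Kw Ks dw ds E" by (rule law)
  show "finite parts" by (rule finite_parts)
  show "finite (recipients j)" if "j \<in> parts" for j
  proof (cases j)
    case (Inl S)
    then have "S \<subseteq> {1..Kw}" using that unfolding parts_def by auto
    then show ?thesis using Inl unfolding recipients_def by (simp add: rev_finite_subset[of "{1..Kw}"])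
  next
    case (Inr j')
    then show ?thesis unfolding recipients_def by simp
  qed
  show "\<And>j. j \<in> parts \<Longrightarrow> I j \<subseteq> {0..<n}" by (rule I1)
  show "\<And>j1 j2. j1 \<in> parts \<Longrightarrow> j2 \<in> parts \<Longrightarrow> j1 \<noteq> j2 \<Longrightarrow> I j1 \<inter> I j2 = {}" by (rule I2)
  show "\<And>j w. j \<in> parts \<Longrightarrow> w \<in> W \<Longrightarrow> part_msg d j w \<in> PiE (recipients j) (\<lambda>_. {..<alphabet j})" by (rule part_msg_mem[OF d])
  show "\<And>j k w. j \<in> parts \<Longrightarrow> k \<in> recipients j \<Longrightarrow> w \<in> W \<Longrightarrow> (side_info d j k (if k \<le> Kw then cache k w else 0))(k := part_msg d j w k) = part_msg d j w"
    by (rule side_info_part_msg[OF d])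
  show "\<And>k w. k \<in> {1..Kw+Ks} \<Longrightarrow> w \<in> W \<Longrightarrow> reconstruct d k (if k \<le> Kw then cache k w else 0) (\<lambda>j. if j \<in> parts \<and> k \<in> recipients j then part_msg d j w k else 0) = w (d k)"
    by (rule reconstruct_part_msg[OF d])
qed

definition "erasure_factor s (j :: nat set + nat) = (case j of Inl _ \<Rightarrow> dw + (1 - dw) * 2 powr (- real F * s) | Inr _ \<Rightarrow> ds + (1 - ds) * 2 powr (- real F * s))"
definition "error_sum s = (\<Sum>j\<in>parts. (real (alphabet j) - 1) powr s * erasure_factor s j ^ slot_len j)"

lemma erasure_factor_nonneg: assumes "0 \<le> dw" "dw \<le> 1" "0 \<le> ds" "ds \<le> 1" shows "0 \<le> erasure_factor s j"
  using assms unfolding erasure_factor_def by (cases j) (auto intro!: add_nonneg_nonneg mult_nonneg_nonneg)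

lemma exists_slots_for_parts:
  "\<exists>I. (\<forall>j\<in>parts. I j \<subseteq> {0..<n} \<and> card (I j) = slot_len j) \<and>
       (\<forall>j1\<in>parts. \<forall>j2\<in>parts. j1 \<noteq> j2 \<longrightarrow> I j1 \<inter> I j2 = {})"
proof -
  obtain I where I: "\<forall>j\<in>parts. I j \<subseteq> {0..<(\<Sum>j\<in>parts. slot_len j)} \<and> card (I j) = slot_len j"
    and dis: "\<forall>j1\<in>parts. \<forall>j2\<in>parts. j1 \<noteq> j2 \<longrightarrow> I j1 \<inter> I j2 = {}"
    using exists_disjoint_slots[OF finite_parts, of slot_len] by (elim exE conjE)
  have sub: "{0..<(\<Sum>j\<in>parts. slot_len j)} \<subseteq> {0..<n}" using sum_slot_len_le by simp
  have "I j \<subseteq> {0..<n} \<and> card (I j) = slot_len j" if "j \<in> parts" for j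
    using I that subset_trans[OF _ sub, of "I j"] by simp
  with dis show ?thesis by (intro exI[of _ I]) simp
qed

lemma erasure_factor_eq:
  assumes "j \<in> parts" "k \<in> recipients j"
  shows "erasure_prob Kw dw ds k + (1 - erasure_prob Kw dw ds k) * 2 powr (- real F * s) = erasure_factor s j"
  using assms by (cases j) (auto simp: parts_def recipients_def erasure_factor_def erasure_prob_def)

lemma exists_delivery_for_demand:
  assumes s: "0 < s" "s \<le> 1" and dd: "0 \<le> dw" "dw \<le> 1" "0 \<le> ds" "ds \<le> 1"
    and d: "d \<in> demand_set (Kw+Ks) D"
  shows "\<exists>fd phid. (\<forall>w\<in>W. \<forall>t<n. length (fd w t) = F) \<and>
       error_prob Kw Ks D E n R cache (\<lambda>_. fd) (\<lambda>_. phid) d \<le> real (Kw+Ks) * error_sum s"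
proof -
  obtain I where I: "\<forall>j\<in>parts. I j \<subseteq> {0..<n} \<and> card (I j) = slot_len j"
    and dis: "\<forall>j1\<in>parts. \<forall>j2\<in>parts. j1 \<noteq> j2 \<longrightarrow> I j1 \<inter> I j2 = {}"
    using exists_slots_for_parts by (elim exE conjE)
  interpret S: slotted_scheme Kw Ks D dw ds R E n F cache d parts recipients alphabet I
      "part_msg d" "side_info d" "reconstruct d"
    by (rule slotted_scheme_demand[OF d]) (use I dis in blast)+
  have "S.error_bound s \<le> (\<Sum>k\<in>{1..Kw+Ks}. error_sum s)"
    unfolding S.error_bound_def error_sum_def
  proof (rule sum_mono)
    fix k assume k: "k \<in> {1..Kw+Ks}"
    have "(\<Sum>j\<in>{j\<in>parts. k \<in> recipients j}. (real (alphabet j) - 1) powr s *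
          (erasure_prob Kw dw ds k + (1 - erasure_prob Kw dw ds k) * 2 powr (- real F * s)) ^ card (I j))
        = (\<Sum>j\<in>{j\<in>parts. k \<in> recipients j}. (real (alphabet j) - 1) powr s * erasure_factor s j ^ slot_len j)"
    proof (rule sum.cong)
      fix j assume "j \<in> {j\<in>parts. k \<in> recipients j}"
      then show "(real (alphabet j) - 1) powr s *
          (erasure_prob Kw dw ds k + (1 - erasure_prob Kw dw ds k) * 2 powr (- real F * s)) ^ card (I j)
        = (real (alphabet j) - 1) powr s * erasure_factor s j ^ slot_len j"
        using I erasure_factor_eq[of j k s] by simp
    qed simp
    also have "\<dots> \<le> (\<Sum>j\<in>parts. (real (alphabet j) - 1) powr s * erasure_factor s j ^ slot_len j)"
      using finite_parts erasure_factor_nonneg[OF dd] by (intro sum_mono2) auto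
    finally show "(\<Sum>j\<in>{j\<in>parts. k \<in> recipients j}. (real (alphabet j) - 1) powr s *
          (erasure_prob Kw dw ds k + (1 - erasure_prob Kw dw ds k) * 2 powr (- real F * s)) ^ card (I j))
        \<le> (\<Sum>j\<in>parts. (real (alphabet j) - 1) powr s * erasure_factor s j ^ slot_len j)" .
  qed
  then have bound: "S.error_bound s \<le> real (Kw+Ks) * error_sum s" by simp
  obtain fd phid where "\<forall>w\<in>W. \<forall>t<n. length (fd w t) = F"
    "error_prob Kw Ks D E n R cache (\<lambda>_. fd) (\<lambda>_. phid) d \<le> S.error_bound s"
    using S.exists_good_codebook[OF s] by blast
  then show ?thesis using bound by (intro exI[of _ fd] exI[of _ phid]) simp
qed

lemma exists_delivery_error_le:
  assumes s: "0 < s" "s \<le> 1" and dd: "0 \<le> dw" "dw \<le> 1" "0 \<le> ds" "ds \<le> 1"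
  shows "\<exists>f phi. (\<forall>d\<in>demand_set (Kw+Ks) D. \<forall>w\<in>W. \<forall>t<n. length (f d w t) = F) \<and>
      (\<forall>d\<in>demand_set (Kw+Ks) D. error_prob Kw Ks D E n R cache f phi d \<le> real (Kw+Ks) * error_sum s)"
proof -
  obtain f phi where "\<forall>d\<in>demand_set (Kw+Ks) D. (\<forall>w\<in>W. \<forall>t<n. length (f d w t) = F) \<and>
       error_prob Kw Ks D E n R cache (\<lambda>_. f d) (\<lambda>_. phi d) d \<le> real (Kw+Ks) * error_sum s"
    using exists_delivery_for_demand[OF s dd] by metis
  moreover have "error_prob Kw Ks D E n R cache f phi d
      = error_prob Kw Ks D E n R cache (\<lambda>_. f d) (\<lambda>_. phi d) d" for d
    unfolding error_prob_def ..
  ultimately show ?thesis by (intro exI[of _ f] exI[of _ phi]) simp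
qed

end

section \<open>Choice of the parameters\<close>

text \<open>The scheme for the weights \<open>lam\<close> and the slack \<open>\<eta>\<close>, at block length \<open>n\<close>: a subfile indexed
  by a \<open>t\<close>-set has \<open>b n t \<approx> n \<beta> t\<close> bits, the block for a set \<open>S\<close> of \<open>u + 1\<close> weak receivers has
  \<open>lw n u\<close> channel uses, the block of a strong receiver \<open>ls n\<close> channel uses, and the rate is
  \<open>R = (1 - 2\<eta>) L\<close>.\<close>
locale rate_mixture =
  fixes Kw Ks D F :: nat and dw ds M :: real and E :: "nat set pmf" and lam :: "nat \<Rightarrow> real" and \<eta> :: real
  assumes Kw1: "1 \<le> Kw" and Ks1: "1 \<le> Ks" and F1: "1 \<le> F"
    and ds0: "0 < ds" and dsw: "ds \<le> dw" and dw1: "dw < 1"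
    and law: "valid_erasure_law Kw Ks dw ds E"
    and M0: "0 \<le> M"
    and lam0: "\<forall>t\<in>{0..Kw}. 0 \<le> lam t"
    and lam1: "(\<Sum>t=0..Kw. lam t) = 1"
    and lamM: "(\<Sum>t=0..Kw. lam t * M_sep Kw Ks D F dw ds t) = M"
    and eta: "0 < \<eta>" "\<eta> < 1/2"
begin

definition "Rt t = R_sep Kw Ks F dw ds t"
definition "L = (\<Sum>t=0..Kw. lam t * Rt t)"
definition "R = (1 - 2 * \<eta>) * L"
definition "\<beta> t = (1 - \<eta>) * lam t * Rt t / real (Kw choose t)"
definition "b n t = nat \<lfloor>\<beta> t * real n\<rfloor>"
definition "cw = (1 + \<eta>) / (real F * (1 - dw))"
definition "lw n u = nat \<lceil>real (b n u) * cw\<rceil>"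
definition "ls n = nat \<lceil>real n * R * (1 + \<eta>) / (real F * (1 - ds))\<rceil>"
definition "den t = (real Kw - real t) / ((real t + 1) * (1 - dw)) + real Ks / (1 - ds)"

lemma den_pos: "t \<le> Kw \<Longrightarrow> 0 < den t"
proof -
  assume t: "t \<le> Kw"
  have "0 \<le> (real Kw - real t) / ((real t + 1) * (1 - dw))" using t dw1 by simp
  moreover have "0 < real Ks / (1 - ds)" using Ks1 dsw dw1 by simp
  ultimately show ?thesis unfolding den_def by linarith
qed

lemma Rt_eq: "Rt t = real F / den t" unfolding Rt_def R_sep_def den_def by simp

lemma Rt_pos: "t \<le> Kw \<Longrightarrow> 0 < Rt t" using den_pos F1 unfolding Rt_eq by simp

lemma Rt_den: "t \<le> Kw \<Longrightarrow> Rt t * den t = real F" using den_pos[of t] unfolding Rt_eq by simp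

lemma lamRt_nonneg: "t \<le> Kw \<Longrightarrow> 0 \<le> lam t * Rt t"
  using lam0 Rt_pos[of t] by simp

lemma L_pos: "0 < L"
proof -
  have "\<exists>t\<in>{0..Kw}. lam t \<noteq> 0"
  proof (rule ccontr)
    assume "\<not> ?thesis" then have "(\<Sum>t=0..Kw. lam t) = 0" by simp
    then show False using lam1 by simp
  qed
  then obtain t where t: "t \<in> {0..Kw}" "lam t \<noteq> 0" by blast
  then have lt: "0 < lam t * Rt t" using lam0 Rt_pos[of t] by (simp add: order.not_eq_order_implies_strict)
  have "lam t * Rt t \<le> L" unfolding L_def
    using t lamRt_nonneg by (intro member_le_sum) auto
  then show ?thesis using lt by simp
qed

lemma R_pos: "0 < R" unfolding R_def using L_pos eta by simp

lemma beta_nonneg: "t \<le> Kw \<Longrightarrow> 0 \<le> \<beta> t"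
  unfolding \<beta>_def using lam0 Rt_pos[of t] eta by (auto intro!: divide_nonneg_nonneg mult_nonneg_nonneg)

lemma beta_choose: "t \<le> Kw \<Longrightarrow> real (Kw choose t) * \<beta> t = (1 - \<eta>) * lam t * Rt t"
  unfolding \<beta>_def by simp

lemma b_le: "t \<le> Kw \<Longrightarrow> real (b n t) \<le> \<beta> t * real n"
  unfolding b_def using beta_nonneg[of t] by (simp add: of_nat_nat)

lemma b_ge: "t \<le> Kw \<Longrightarrow> \<beta> t * real n - 1 \<le> real (b n t)"
proof -
  assume t: "t \<le> Kw"
  have "0 \<le> \<beta> t * real n" using beta_nonneg[OF t] by simp
  then show ?thesis unfolding b_def by (simp add: of_nat_nat)
qed

lemma subfile_bits_ge:
  "real n * ((1 - \<eta>) * L) - (\<Sum>t=0..Kw. real (Kw choose t)) \<le> real (\<Sum>T\<in>Pow {1..Kw}. b n (card T))"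
proof -
  have "real n * ((1 - \<eta>) * L) - (\<Sum>t=0..Kw. real (Kw choose t))
      = (\<Sum>t=0..Kw. real (Kw choose t) * \<beta> t * real n - real (Kw choose t))"
    unfolding L_def using beta_choose
    by (simp add: sum_subtractf sum_distrib_left mult_ac)
  also have "\<dots> \<le> (\<Sum>t=0..Kw. real (Kw choose t) * real (b n t))"
  proof (rule sum_mono)
    fix t assume "t \<in> {0..Kw}"
    then have "real (Kw choose t) * (\<beta> t * real n - 1) \<le> real (Kw choose t) * real (b n t)"
      using b_ge by (intro mult_left_mono) auto
    then show "real (Kw choose t) * \<beta> t * real n - real (Kw choose t) \<le> real (Kw choose t) * real (b n t)"
      by (simp add: algebra_simps)
  qed
  also have "\<dots> = real (\<Sum>T\<in>Pow {1..Kw}. b n (card T))"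
    using sum_Pow_card[of "{1..Kw}" "\<lambda>t. real (b n t)"] by simp
  finally show ?thesis .
qed

lemma eventually_num_msgs_le_subfiles:
  "eventually (\<lambda>n. num_msgs n R \<le> 2 ^ (\<Sum>T\<in>Pow {1..Kw}. b n (card T))) sequentially"
proof -
  have "eventually (\<lambda>n. (\<Sum>t=0..Kw. real (Kw choose t)) \<le> (\<eta> * L) * real n) sequentially"
    using eta L_pos by (intro eventually_le_mult_real) simp
  then show ?thesis
  proof (rule eventually_mono)
    fix n assume "(\<Sum>t=0..Kw. real (Kw choose t)) \<le> (\<eta> * L) * real n"
    then have "real n * R \<le> real (\<Sum>T\<in>Pow {1..Kw}. b n (card T))"
      using subfile_bits_ge[of n] unfolding R_def by (simp add: algebra_simps)
    then show "num_msgs n R \<le> 2 ^ (\<Sum>T\<in>Pow {1..Kw}. b n (card T))" by (rule num_msgs_le_power)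
  qed
qed

lemma cache_share: "i \<in> {1..Kw} \<Longrightarrow>
   real D * (\<Sum>T\<in>{T\<in>Pow {1..Kw}. i \<in> T}. \<beta> (card T)) = (1 - \<eta>) * M"
proof -
  assume i: "i \<in> {1..Kw}"
  have "(\<Sum>T\<in>{T\<in>Pow {1..Kw}. i \<in> T}. \<beta> (card T)) = (\<Sum>t=0..Kw - 1. real ((Kw - 1) choose t) * \<beta> (Suc t))"
    using sum_Pow_card_mem[of "{1..Kw}" i \<beta>] i by simp
  also have "\<dots> = (\<Sum>t=0..Kw - 1. (real (Suc t) / real Kw) * ((1 - \<eta>) * lam (Suc t) * Rt (Suc t)))"
  proof (intro sum.cong refl)
    fix t assume t: "t \<in> {0..Kw - 1}"
    then have tK: "Suc t \<le> Kw" using Kw1 by auto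
    have "real (Suc t) * real (Kw choose Suc t) = real Kw * real ((Kw - 1) choose t)"
      using times_binomial_minus1_eq[of "Suc t" Kw] by (simp only: of_nat_mult[symmetric]) simp
    then have "real ((Kw - 1) choose t) = real (Suc t) / real Kw * real (Kw choose Suc t)"
      using Kw1 by (simp add: field_simps)
    then show "real ((Kw - 1) choose t) * \<beta> (Suc t) = (real (Suc t) / real Kw) * ((1 - \<eta>) * lam (Suc t) * Rt (Suc t))"
      using beta_choose[OF tK] by (simp add: mult.assoc)
  qed
  finally have s1: "(\<Sum>T\<in>{T\<in>Pow {1..Kw}. i \<in> T}. \<beta> (card T)) = (\<Sum>t=0..Kw - 1. (real (Suc t) / real Kw) * ((1 - \<eta>) * lam (Suc t) * Rt (Suc t)))" .
  have "real D * (\<Sum>t=0..Kw - 1. (real (Suc t) / real Kw) * ((1 - \<eta>) * lam (Suc t) * Rt (Suc t)))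
      = (1 - \<eta>) * (\<Sum>t=0..Kw - 1. lam (Suc t) * M_sep Kw Ks D F dw ds (Suc t))"
    unfolding sum_distrib_left M_sep_def Rt_def using Kw1 by (intro sum.cong refl) (simp add: field_simps)
  also have "(\<Sum>t=0..Kw - 1. lam (Suc t) * M_sep Kw Ks D F dw ds (Suc t)) = (\<Sum>t=Suc 0..Suc (Kw - 1). lam t * M_sep Kw Ks D F dw ds t)"
    by (rule sum.shift_bounds_cl_Suc_ivl[symmetric])
  also have "Suc (Kw - 1) = Kw" using Kw1 by simp
  also have "(\<Sum>t=Suc 0..Kw. lam t * M_sep Kw Ks D F dw ds t) = M"
    using lamM Kw1 by (simp add: sum.atLeast_Suc_atMost M_sep_def)
  finally show ?thesis using s1 by simp
qed

lemma cache_fits_memory: "i \<in> {1..Kw} \<Longrightarrow> 2 ^ (D * (\<Sum>T\<in>{T\<in>Pow {1..Kw}. i \<in> T}. b n (card T))) \<le> num_msgs n M"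
proof -
  assume i: "i \<in> {1..Kw}"
  let ?k = "D * (\<Sum>T\<in>{T\<in>Pow {1..Kw}. i \<in> T}. b n (card T))"
  have "real ?k = real D * (\<Sum>T\<in>{T\<in>Pow {1..Kw}. i \<in> T}. real (b n (card T)))" by simp
  also have "\<dots> \<le> real D * (\<Sum>T\<in>{T\<in>Pow {1..Kw}. i \<in> T}. \<beta> (card T) * real n)"
  proof (intro mult_left_mono sum_mono)
    fix T assume "T \<in> {T\<in>Pow {1..Kw}. i \<in> T}"
    then have "card T \<le> Kw" using card_mono[of "{1..Kw}" T] by auto
    then show "real (b n (card T)) \<le> \<beta> (card T) * real n" by (rule b_le)
  qed simp
  also have "\<dots> = real n * (real D * (\<Sum>T\<in>{T\<in>Pow {1..Kw}. i \<in> T}. \<beta> (card T)))"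
    by (simp add: sum_distrib_left sum_distrib_right mult_ac)
  also have "\<dots> = real n * ((1 - \<eta>) * M)" using cache_share[OF i] by simp
  also have "\<dots> \<le> real n * M"
  proof -
    have "0 \<le> \<eta> * M" using M0 eta by simp
    then have "(1 - \<eta>) * M \<le> M" by (simp add: algebra_simps)
    then show ?thesis by (intro mult_left_mono) auto
  qed
  finally show ?thesis by (rule power_le_num_msgs)
qed

definition "weak_load = (\<Sum>u=0..Kw. lam u * Rt u * ((real Kw - real u) / ((real u + 1) * (1 - dw))))"
definition "strong_load = L * real Ks / (1 - ds)"

lemma weak_plus_strong_load: "weak_load + strong_load = real F"
proof -
  have e2: "strong_load = (\<Sum>u=0..Kw. lam u * Rt u * (real Ks / (1 - ds)))"
    unfolding strong_load_def L_def by (simp add: sum_distrib_right sum_divide_distrib)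
  have "weak_load + strong_load = (\<Sum>u=0..Kw. lam u * Rt u * ((real Kw - real u) / ((real u + 1) * (1 - dw))) + lam u * Rt u * (real Ks / (1 - ds)))"
    unfolding e2 weak_load_def by (simp add: sum.distrib)
  also have "\<dots> = (\<Sum>u=0..Kw. lam u * (Rt u * den u))"
    unfolding den_def by (intro sum.cong refl) (simp add: distrib_left mult.assoc)
  also have "\<dots> = (\<Sum>u=0..Kw. lam u * real F)" by (intro sum.cong refl) (simp add: Rt_den)
  also have "\<dots> = real F" using lam1 by (simp add: sum_distrib_right[symmetric])
  finally show ?thesis .
qed

lemma strong_load_nonneg: "0 \<le> strong_load" unfolding strong_load_def using L_pos dsw dw1 by simp

lemma lw_le: "u \<le> Kw \<Longrightarrow> real (lw n u) \<le> \<beta> u * real n * cw + 1"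
proof -
  assume u: "u \<le> Kw"
  have cw0: "0 \<le> cw" unfolding cw_def using eta dw1 by simp
  have "real (lw n u) \<le> real (b n u) * cw + 1"
    unfolding lw_def using cw0 by (simp add: of_nat_nat)
  also have "\<dots> \<le> \<beta> u * real n * cw + 1" using b_le[OF u] cw0 by (simp add: mult_right_mono)
  finally show ?thesis .
qed

lemma ls_le: "real (ls n) \<le> real n * R * (1 + \<eta>) / (real F * (1 - ds)) + 1"
proof -
  have "0 \<le> real n * R * (1 + \<eta>) / (real F * (1 - ds))" using R_pos eta dsw dw1 by simp
  then show ?thesis unfolding ls_def by (simp add: of_nat_nat)
qed

lemma weak_subfile_share:
  "(\<Sum>u=0..Kw. real (Kw choose Suc u) * \<beta> u) = (1 - \<eta>) * (1 - dw) * weak_load"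
proof -
  have "real (Kw choose Suc u) * \<beta> u
      = (1 - \<eta>) * (1 - dw) * (lam u * Rt u * ((real Kw - real u) / ((real u + 1) * (1 - dw))))"
    if u: "u \<in> {0..Kw}" for u
  proof -
    have "real (Kw choose Suc u) = real (Kw choose u) * (real Kw - real u) / (real u + 1)"
      using binomial_Suc_mult[of Kw u] by (simp add: field_simps)
    then have "real (Kw choose Suc u) * \<beta> u = (real (Kw choose u) * \<beta> u) * (real Kw - real u) / (real u + 1)"
      by simp
    also have "\<dots> = (1 - \<eta>) * lam u * Rt u * (real Kw - real u) / (real u + 1)"
      using beta_choose u by simp
    finally show ?thesis using dw1 by simp
  qed
  then show ?thesis unfolding weak_load_def by (simp add: sum_distrib_left)
qed

lemma weak_slots_le:
  "real (\<Sum>S\<in>{S\<in>Pow {1..Kw}. S \<noteq> {}}. lw n (card S - 1))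
     \<le> real n * ((1 + \<eta>) * (1 - \<eta>) / real F) * weak_load + (\<Sum>u=0..Kw. real (Kw choose Suc u))"
proof -
  have "real (\<Sum>S\<in>{S\<in>Pow {1..Kw}. S \<noteq> {}}. lw n (card S - 1))
      = (\<Sum>u=0..Kw. real (Kw choose Suc u) * real (lw n u))"
    using sum_Pow_nonempty_card[of "{1..Kw}" "\<lambda>u. real (lw n u)"] by simp
  also have "\<dots> \<le> (\<Sum>u=0..Kw. real (Kw choose Suc u) * (\<beta> u * real n * cw + 1))"
    using lw_le by (intro sum_mono mult_left_mono) auto
  also have "\<dots> = real n * cw * (\<Sum>u=0..Kw. real (Kw choose Suc u) * \<beta> u) + (\<Sum>u=0..Kw. real (Kw choose Suc u))"
    by (simp add: sum.distrib sum_distrib_left algebra_simps)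
  also have "real n * cw * (\<Sum>u=0..Kw. real (Kw choose Suc u) * \<beta> u)
      = real n * ((1 + \<eta>) * (1 - \<eta>) / real F) * weak_load"
  proof -
    have "cw * (1 - dw) = (1 + \<eta>) / real F" unfolding cw_def using dw1 by simp
    moreover have "real n * cw * ((1 - \<eta>) * (1 - dw) * weak_load) = real n * (cw * (1 - dw)) * (1 - \<eta>) * weak_load"
      by (simp only: mult_ac)
    ultimately show ?thesis unfolding weak_subfile_share by simp
  qed
  finally show ?thesis .
qed

lemma strong_slots_le:
  "real (Ks * ls n) \<le> real n * ((1 + \<eta>) * (1 - 2 * \<eta>) / real F) * strong_load + real Ks"
proof -
  have "real (Ks * ls n) \<le> real Ks * (real n * R * (1 + \<eta>) / (real F * (1 - ds)) + 1)"
    using ls_le by (simp add: mult_left_mono)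
  also have "\<dots> = real n * ((1 + \<eta>) * (1 - 2 * \<eta>) / real F) * strong_load + real Ks"
    unfolding strong_load_def R_def using dsw dw1 F1 by (simp add: field_simps)
  finally show ?thesis .
qed

text \<open>The blocks fit: their total length is about \<open>(1 - \<eta>\<^sup>2) n\<close> by \<open>weak_plus_strong_load\<close>.\<close>
lemma eventually_slots_fit:
  "eventually (\<lambda>n. (\<Sum>S\<in>{S\<in>Pow {1..Kw}. S \<noteq> {}}. lw n (card S - 1)) + Ks * ls n \<le> n) sequentially"
proof -
  define C0 where "C0 = (\<Sum>u=0..Kw. real (Kw choose Suc u)) + real Ks"
  have "eventually (\<lambda>n. C0 \<le> (\<eta> * \<eta>) * real n) sequentially"
    using eta by (intro eventually_le_mult_real) simp
  then show ?thesis
  proof (rule eventually_mono)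
    fix n assume n: "C0 \<le> (\<eta> * \<eta>) * real n"
    have "real n * ((1 + \<eta>) * (1 - 2 * \<eta>) / real F) * strong_load
        \<le> real n * ((1 + \<eta>) * (1 - \<eta>) / real F) * strong_load"
      using eta strong_load_nonneg F1 by (intro mult_right_mono mult_left_mono divide_right_mono) auto
    moreover have "real n * ((1 + \<eta>) * (1 - \<eta>) / real F) * weak_load
        + real n * ((1 + \<eta>) * (1 - \<eta>) / real F) * strong_load = real n * (1 - \<eta> * \<eta>)"
    proof -
      have "real F \<noteq> 0" using F1 by simp
      then have "real n * ((1 + \<eta>) * (1 - \<eta>) / real F) * (weak_load + strong_load) = real n * (1 - \<eta> * \<eta>)"
        unfolding weak_plus_strong_load by (simp add: field_simps)
      then show ?thesis by (simp add: algebra_simps)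
    qed
    ultimately have "real (\<Sum>S\<in>{S\<in>Pow {1..Kw}. S \<noteq> {}}. lw n (card S - 1)) + real (Ks * ls n)
        \<le> real n * (1 - \<eta> * \<eta>) + C0"
      using weak_slots_le[of n] strong_slots_le[of n] unfolding C0_def by linarith
    also have "\<dots> \<le> real n" using n by (simp add: algebra_simps)
    finally show "(\<Sum>S\<in>{S\<in>Pow {1..Kw}. S \<noteq> {}}. lw n (card S - 1)) + Ks * ls n \<le> n"
      by (simp only: of_nat_add[symmetric] of_nat_le_iff)
  qed
qed

definition "\<kappa> = \<eta> / (2 + \<eta>)"
definition "aw s = dw + (1 - dw) * 2 powr (- real F * s)"
definition "as s = ds + (1 - ds) * 2 powr (- real F * s)"
definition "weak_part_bound s n u = (if b n u = 0 then 0 else 2 powr (- s * real (b n u) * \<kappa>))"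

lemma kappa_pos: "0 < \<kappa>" unfolding \<kappa>_def using eta by simp

lemma exists_common_exponent: "\<exists>s. 0 < s \<and> s \<le> 1 \<and> aw s \<le> 2 powr (- real F * s * ((1 - dw) / (1 + \<eta>/2)))
                    \<and> as s \<le> 2 powr (- real F * s * ((1 - ds) / (1 + \<eta>/2)))"
proof -
  have Fp: "0 < real F" using F1 by simp
  have c1: "(1 - dw) / (1 + \<eta>/2) < 1 - dw" using dw1 eta by (simp add: divide_less_eq)
  have c2: "(1 - ds) / (1 + \<eta>/2) < 1 - ds" using dsw dw1 eta by (simp add: divide_less_eq)
  obtain d1 where d1: "d1 > 0" "\<forall>s. 0 < s \<and> s < d1 \<longrightarrow> dw + (1 - dw) * 2 powr (- real F * s) < 2 powr (- real F * s * ((1 - dw) / (1 + \<eta>/2)))"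
    using erasure_factor_lt_near_0[of dw "(1 - dw) / (1 + \<eta>/2)" "real F"] ds0 dsw dw1 eta c1 Fp by auto
  obtain d2 where d2: "d2 > 0" "\<forall>s. 0 < s \<and> s < d2 \<longrightarrow> ds + (1 - ds) * 2 powr (- real F * s) < 2 powr (- real F * s * ((1 - ds) / (1 + \<eta>/2)))"
    using erasure_factor_lt_near_0[of ds "(1 - ds) / (1 + \<eta>/2)" "real F"] ds0 dsw dw1 eta c2 Fp by auto
  define s where "s = min 1 (min (d1/2) (d2/2))"
  have s: "0 < s" "s \<le> 1" "s < d1" "s < d2" unfolding s_def using d1 d2 by auto
  show ?thesis using s d1(2) d2(2) unfolding aw_def as_def by (intro exI[of _ s]) (auto intro: less_imp_le)
qed

lemma weak_part_term_le:
  assumes s: "0 < s" "s \<le> 1" and saw: "aw s \<le> 2 powr (- real F * s * ((1 - dw) / (1 + \<eta>/2)))"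
    and u: "u \<le> Kw"
  shows "(real (2 ^ b n u :: nat) - 1) powr s * aw s ^ lw n u \<le> weak_part_bound s n u"
proof (cases "b n u = 0")
  case True then show ?thesis unfolding weak_part_bound_def by simp
next
  case False
  have B: "0 \<le> real (b n u)" by simp
  have X: "0 \<le> real (2 ^ b n u :: nat) - 1" by simp
  have X2: "real (2 ^ b n u :: nat) - 1 \<le> 2 powr real (b n u)"
    by (simp add: powr_realpow)
  have l: "real (b n u) * (1 + \<eta>) / (real F * (1 - dw)) \<le> real (lw n u)"
  proof -
    have "real (b n u) * (1 + \<eta>) / (real F * (1 - dw)) = real (b n u) * cw" unfolding cw_def by simp
    also have "\<dots> \<le> real (lw n u)" unfolding lw_def by (rule real_nat_ceiling_ge)
    finally show ?thesis .
  qed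
  have "(real (2 ^ b n u :: nat) - 1) powr s * aw s ^ lw n u \<le> 2 powr (- s * real (b n u) * (\<eta> / (2 + \<eta>)))"
    by (rule powr_mult_erasure_power_le[OF _ dw1 s _ eta(1) _ saw X X2 B l]) (use F1 ds0 dsw in \<open>auto simp: aw_def\<close>)
  then show ?thesis using False unfolding weak_part_bound_def \<kappa>_def by simp
qed

lemma strong_part_term_le:
  assumes s: "0 < s" "s \<le> 1" and sas: "as s \<le> 2 powr (- real F * s * ((1 - ds) / (1 + \<eta>/2)))"
  shows "(real (num_msgs n R + 1) - 1) powr s * as s ^ ls n \<le> 2 powr (- s * (real n * R) * \<kappa>)"
proof -
  have B: "0 \<le> real n * R" using R_pos by simp
  have X: "0 \<le> real (num_msgs n R)" by simp
  have X2: "real (num_msgs n R) \<le> 2 powr (real n * R)" unfolding num_msgs_def by (simp add: of_nat_nat)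
  have l: "real n * R * (1 + \<eta>) / (real F * (1 - ds)) \<le> real (ls n)"
    unfolding ls_def by (rule real_nat_ceiling_ge)
  have "real (num_msgs n R) powr s * as s ^ ls n \<le> 2 powr (- s * (real n * R) * (\<eta> / (2 + \<eta>)))"
    by (rule powr_mult_erasure_power_le[OF _ _ s _ eta(1) _ sas X X2 B l]) (use F1 ds0 dsw dw1 in \<open>auto simp: as_def\<close>)
  then show ?thesis unfolding \<kappa>_def by simp
qed

lemma weak_part_bound_tendsto_0:
  assumes s: "0 < s" and u: "u \<le> Kw"
  shows "(\<lambda>n. weak_part_bound s n u) \<longlonglongrightarrow> 0"
proof (cases "\<beta> u = 0")
  case True
  then have "\<And>n. b n u = 0" unfolding b_def by simp
  then show ?thesis unfolding weak_part_bound_def by simp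
next
  case False
  then have bp: "0 < \<beta> u" using beta_nonneg[OF u] by simp
  have up: "weak_part_bound s n u \<le> 2 powr (s * \<kappa>) * 2 powr (- (s * \<kappa> * \<beta> u) * real n)" for n
  proof (cases "b n u = 0")
    case True then show ?thesis unfolding weak_part_bound_def by simp
  next
    case False
    have "- s * real (b n u) * \<kappa> \<le> - s * (\<beta> u * real n - 1) * \<kappa>"
      using b_ge[OF u, of n] s kappa_pos by (simp add: mult_le_cancel_left mult_le_cancel_right)
    then have "2 powr (- s * real (b n u) * \<kappa>) \<le> 2 powr (- s * (\<beta> u * real n - 1) * \<kappa>)" by simp
    also have "- s * (\<beta> u * real n - 1) * \<kappa> = s * \<kappa> + - (s * \<kappa> * \<beta> u) * real n" by (simp add: algebra_simps)
    also have "2 powr (s * \<kappa> + - (s * \<kappa> * \<beta> u) * real n) = 2 powr (s * \<kappa>) * 2 powr (- (s * \<kappa> * \<beta> u) * real n)"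
      by (rule powr_add)
    finally show ?thesis using False unfolding weak_part_bound_def by simp
  qed
  have lo: "0 \<le> weak_part_bound s n u" for n unfolding weak_part_bound_def by simp
  have "(\<lambda>n. 2 powr (s * \<kappa>) * 2 powr (- (s * \<kappa> * \<beta> u) * real n)) \<longlonglongrightarrow> 0"
    using s kappa_pos bp by (intro LIMSEQ_powr_neg_mult) simp
  then show ?thesis
    by (intro tendsto_sandwich[of "\<lambda>_. 0" "\<lambda>n. weak_part_bound s n u" sequentially "\<lambda>n. 2 powr (s * \<kappa>) * 2 powr (- (s * \<kappa> * \<beta> u) * real n)"])
       (use lo up in auto)
qed

lemma card_subfile_space: "card (PiE (Pow {1..Kw}) (\<lambda>T. {..<(2::nat) ^ b n (card T)})) = 2 ^ (\<Sum>T\<in>Pow {1..Kw}. b n (card T))"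
  by (simp add: card_PiE power_sum)

lemma card_cache_space: "card (PiE ({1..D} \<times> {T\<in>Pow {1..Kw}. i \<in> T}) (\<lambda>(d', T). {..<(2::nat) ^ b n (card T)}))
   = 2 ^ (D * (\<Sum>T\<in>{T\<in>Pow {1..Kw}. i \<in> T}. b n (card T)))"
proof -
  have "card (PiE ({1..D} \<times> {T\<in>Pow {1..Kw}. i \<in> T}) (\<lambda>(d', T). {..<(2::nat) ^ b n (card T)}))
      = (\<Prod>x\<in>{1..D} \<times> {T\<in>Pow {1..Kw}. i \<in> T}. 2 ^ b n (card (snd x)))"
    by (simp add: card_PiE case_prod_beta)
  also have "\<dots> = 2 ^ (\<Sum>x\<in>{1..D} \<times> {T\<in>Pow {1..Kw}. i \<in> T}. b n (card (snd x)))"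
    by (simp add: power_sum)
  also have "(\<Sum>x\<in>{1..D} \<times> {T\<in>Pow {1..Kw}. i \<in> T}. b n (card (snd x))) = D * (\<Sum>T\<in>{T\<in>Pow {1..Kw}. i \<in> T}. b n (card T))"
  proof -
    have "(\<Sum>x\<in>{1..D} \<times> {T\<in>Pow {1..Kw}. i \<in> T}. b n (card (snd x))) = (\<Sum>d'\<in>{1..D}. \<Sum>T\<in>{T\<in>Pow {1..Kw}. i \<in> T}. b n (card T))"
      by (subst sum.cartesian_product) (simp add: case_prod_beta)
    then show ?thesis by simp
  qed
  finally show ?thesis .
qed

lemma exists_coded_caching_scheme:
  assumes c1: "num_msgs n R \<le> 2 ^ (\<Sum>T\<in>Pow {1..Kw}. b n (card T))"
    and c3: "(\<Sum>S\<in>{S\<in>Pow {1..Kw}. S \<noteq> {}}. lw n (card S - 1)) + Ks * ls n \<le> n"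
  shows "\<exists>enc cenc. coded_caching_scheme Kw Ks D dw ds R M E n (b n) (lw n) (ls n) enc cenc"
proof -
  define FV where "FV = PiE (Pow {1..Kw}) (\<lambda>T. {..<(2::nat) ^ b n (card T)})"
  define CV where "CV i = PiE ({1..D} \<times> {T\<in>Pow {1..Kw}. i \<in> T}) (\<lambda>(d', T). {..<(2::nat) ^ b n (card T)})" for i
  have "card {1..num_msgs n R} \<le> card FV" unfolding FV_def card_subfile_space using c1 by simp
  then obtain enc where enc: "enc ` {1..num_msgs n R} \<subseteq> FV" "inj_on enc {1..num_msgs n R}"
    using card_le_inj[of "{1..num_msgs n R}" FV] unfolding FV_def by (auto intro!: finite_PiE)
  have "\<forall>i\<in>{1..Kw}. \<exists>c. c ` CV i \<subseteq> {1..num_msgs n M} \<and> inj_on c (CV i)"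
  proof
    fix i assume i: "i \<in> {1..Kw}"
    show "\<exists>c. c ` CV i \<subseteq> {1..num_msgs n M} \<and> inj_on c (CV i)"
    proof (rule card_le_inj)
      show "finite (CV i)" unfolding CV_def by (intro finite_PiE) (auto simp: case_prod_beta)
      show "card (CV i) \<le> card {1..num_msgs n M}"
        unfolding CV_def card_cache_space using cache_fits_memory[OF i] by simp
    qed simp
  qed
  from bchoice[OF this] obtain cenc
    where cenc: "\<forall>i\<in>{1..Kw}. cenc i ` CV i \<subseteq> {1..num_msgs n M} \<and> inj_on (cenc i) (CV i)"
    by blast
  have "coded_caching_scheme Kw Ks D dw ds R M E n (b n) (lw n) (ls n) enc cenc"
  proof (rule coded_caching_scheme.intro)
    show "\<And>x. x \<in> {1..num_msgs n R} \<Longrightarrow> enc x \<in> PiE (Pow {1..Kw}) (\<lambda>T. {..<2 ^ b n (card T)})"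
      using enc(1) unfolding FV_def by blast
    show "\<And>i. i \<in> {1..Kw} \<Longrightarrow> cenc i ` PiE ({1..D} \<times> {T\<in>Pow {1..Kw}. i \<in> T}) (\<lambda>(d', T). {..<2 ^ b n (card T)})
        \<subseteq> {1..num_msgs n M}"
      using cenc unfolding CV_def by blast
    show "\<And>i. i \<in> {1..Kw} \<Longrightarrow> inj_on (cenc i) (PiE ({1..D} \<times> {T\<in>Pow {1..Kw}. i \<in> T}) (\<lambda>(d', T). {..<2 ^ b n (card T)}))"
      using cenc unfolding CV_def by blast
  qed (use law enc(2) c3 in auto)
  then show ?thesis by blast
qed

definition "total_bound s n = real (Kw + Ks) *
  ((\<Sum>S\<in>{S\<in>Pow {1..Kw}. S \<noteq> {}}. weak_part_bound s n (card S - 1)) + real Ks * 2 powr (- (s * R * \<kappa>) * real n))"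

lemma total_bound_tendsto_0:
  assumes s: "0 < s"
  shows "total_bound s \<longlonglongrightarrow> 0"
proof -
  have "card S - 1 \<le> Kw" if "S \<in> {S\<in>Pow {1..Kw}. S \<noteq> {}}" for S
    using that card_mono[of "{1..Kw}" S] by auto
  then have "(\<lambda>n. \<Sum>S\<in>{S\<in>Pow {1..Kw}. S \<noteq> {}}. weak_part_bound s n (card S - 1)) \<longlonglongrightarrow> (\<Sum>S\<in>{S\<in>Pow {1..Kw}. S \<noteq> {}}. 0)"
    using s by (intro tendsto_sum weak_part_bound_tendsto_0) auto
  moreover have "(\<lambda>n. real Ks * 2 powr (- (s * R * \<kappa>) * real n)) \<longlonglongrightarrow> 0"
    using s R_pos kappa_pos by (intro LIMSEQ_powr_neg_mult) simp
  ultimately have "(\<lambda>n. (\<Sum>S\<in>{S\<in>Pow {1..Kw}. S \<noteq> {}}. weak_part_bound s n (card S - 1))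
      + real Ks * 2 powr (- (s * R * \<kappa>) * real n)) \<longlonglongrightarrow> 0 + 0"
    by (intro tendsto_add) auto
  then show ?thesis
    unfolding total_bound_def using tendsto_mult_right_zero by fastforce
qed

lemma exists_code_error_le:
  assumes s: "0 < s" "s \<le> 1"
    and saw: "aw s \<le> 2 powr (- real F * s * ((1 - dw) / (1 + \<eta>/2)))"
    and sas: "as s \<le> 2 powr (- real F * s * ((1 - ds) / (1 + \<eta>/2)))"
    and c1: "num_msgs n R \<le> 2 ^ (\<Sum>T\<in>Pow {1..Kw}. b n (card T))"
    and c3: "(\<Sum>S\<in>{S\<in>Pow {1..Kw}. S \<noteq> {}}. lw n (card S - 1)) + Ks * ls n \<le> n"
  shows "\<exists>g f phi. (\<forall>i\<in>{1..Kw}. \<forall>w\<in>msg_set D n R. g i w \<in> {1..num_msgs n M}) \<and>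
    (\<forall>d\<in>demand_set (Kw + Ks) D. \<forall>w\<in>msg_set D n R. \<forall>t<n. length (f d w t) = F) \<and>
    (\<forall>d\<in>demand_set (Kw + Ks) D. error_prob Kw Ks D E n R g f phi d \<le> total_bound s n)"
proof -
  obtain enc cenc where "coded_caching_scheme Kw Ks D dw ds R M E n (b n) (lw n) (ls n) enc cenc"
    using exists_coded_caching_scheme[OF c1 c3] by blast
  then interpret Mn: coded_caching_scheme Kw Ks D dw ds R M E n F "b n" "lw n" "ls n" enc cenc .
  define PS where "PS = {S\<in>Pow {1..Kw}. S \<noteq> {}}"
  have "card S - 1 \<le> Kw" if "S \<in> PS" for S
    using that card_mono[of "{1..Kw}" S] unfolding PS_def by auto
  have "Mn.error_sum s = (\<Sum>S\<in>PS. (real (2 ^ b n (card S - 1) :: nat) - 1) powr s * aw s ^ lw n (card S - 1))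
        + (\<Sum>j\<in>{Kw+1..Kw+Ks}. (real (num_msgs n R + 1) - 1) powr s * as s ^ ls n)"
    unfolding Mn.error_sum_def Mn.parts_def PS_def
    by (subst sum.Plus) (auto simp: Mn.alphabet_def Mn.erasure_factor_def Mn.slot_len_def aw_def as_def comp_def)
  also have "\<dots> \<le> (\<Sum>S\<in>PS. weak_part_bound s n (card S - 1)) + (\<Sum>j\<in>{Kw+1..Kw+Ks}. 2 powr (- s * (real n * R) * \<kappa>))"
    using weak_part_term_le[OF s saw] strong_part_term_le[OF s sas] \<open>\<And>S. S \<in> PS \<Longrightarrow> card S - 1 \<le> Kw\<close>
    by (intro add_mono sum_mono) auto
  also have "(\<Sum>j\<in>{Kw+1..Kw+Ks}. 2 powr (- s * (real n * R) * \<kappa>)) = real Ks * 2 powr (- (s * R * \<kappa>) * real n)"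
    by (simp add: mult_ac)
  finally have bound: "real (Kw + Ks) * Mn.error_sum s \<le> total_bound s n"
    unfolding total_bound_def PS_def by (intro mult_left_mono) auto
  have "0 \<le> dw" "dw \<le> 1" "0 \<le> ds" "ds \<le> 1" using ds0 dsw dw1 by auto
  then obtain f phi where f: "\<forall>d\<in>demand_set (Kw+Ks) D. \<forall>w\<in>msg_set D n R. \<forall>t<n. length (f d w t) = F"
    and phi: "\<forall>d\<in>demand_set (Kw+Ks) D. error_prob Kw Ks D E n R Mn.cache f phi d \<le> real (Kw+Ks) * Mn.error_sum s"
    using Mn.exists_delivery_error_le[OF s] by blast
  have "\<forall>d\<in>demand_set (Kw+Ks) D. error_prob Kw Ks D E n R Mn.cache f phi d \<le> total_bound s n"
    using phi bound by (blast intro: order_trans)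
  then show ?thesis using f Mn.cache_range by blast
qed

lemma achievable_R: "achievable Kw Ks D F E R M"
  unfolding achievable_def
proof (intro conjI allI impI)
  show "0 \<le> R" using R_pos by simp
  show "0 \<le> M" by (rule M0)
  fix \<epsilon> :: real assume "0 < \<epsilon>"
  obtain s where s: "0 < s" "s \<le> 1" and saw: "aw s \<le> 2 powr (- real F * s * ((1 - dw) / (1 + \<eta>/2)))"
    and sas: "as s \<le> 2 powr (- real F * s * ((1 - ds) / (1 + \<eta>/2)))"
    using exists_common_exponent by blast
  have "eventually (\<lambda>n. total_bound s n < \<epsilon> \<and> num_msgs n R \<le> 2 ^ (\<Sum>T\<in>Pow {1..Kw}. b n (card T))
      \<and> (\<Sum>S\<in>{S\<in>Pow {1..Kw}. S \<noteq> {}}. lw n (card S - 1)) + Ks * ls n \<le> n \<and> 0 < n) sequentially"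
    using order_tendstoD(2)[OF total_bound_tendsto_0[OF s(1)] \<open>0 < \<epsilon>\<close>]
    by (intro eventually_conj eventually_num_msgs_le_subfiles eventually_slots_fit eventually_gt_at_top)
  then obtain n where n: "total_bound s n < \<epsilon>" "0 < n"
    and c1: "num_msgs n R \<le> 2 ^ (\<Sum>T\<in>Pow {1..Kw}. b n (card T))"
    and c3: "(\<Sum>S\<in>{S\<in>Pow {1..Kw}. S \<noteq> {}}. lw n (card S - 1)) + Ks * ls n \<le> n"
  proof -
    obtain N where "\<forall>n\<ge>N. total_bound s n < \<epsilon> \<and> num_msgs n R \<le> 2 ^ (\<Sum>T\<in>Pow {1..Kw}. b n (card T))
        \<and> (\<Sum>S\<in>{S\<in>Pow {1..Kw}. S \<noteq> {}}. lw n (card S - 1)) + Ks * ls n \<le> n \<and> 0 < n"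
      using \<open>eventually _ sequentially\<close> unfolding eventually_sequentially by blast
    then show ?thesis using that by auto
  qed
  obtain g f phi where g: "\<forall>i\<in>{1..Kw}. \<forall>w\<in>msg_set D n R. g i w \<in> {1..num_msgs n M}"
    and f: "\<forall>d\<in>demand_set (Kw + Ks) D. \<forall>w\<in>msg_set D n R. \<forall>t<n. length (f d w t) = F"
    and err: "\<forall>d\<in>demand_set (Kw + Ks) D. error_prob Kw Ks D E n R g f phi d \<le> total_bound s n"
    using exists_code_error_le[OF s saw sas c1 c3] by blast
  show "\<exists>n>0. \<exists>g f phi. (\<forall>i\<in>{1..Kw}. \<forall>w\<in>msg_set D n R. g i w \<in> {1..num_msgs n M}) \<and>
      (\<forall>d\<in>demand_set (Kw + Ks) D. \<forall>w\<in>msg_set D n R. \<forall>t<n. length (f d w t) = F) \<and>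
      (\<forall>d\<in>demand_set (Kw + Ks) D. error_prob Kw Ks D E n R g f phi d < \<epsilon>)"
  proof -
    have "\<forall>d\<in>demand_set (Kw + Ks) D. error_prob Kw Ks D E n R g f phi d < \<epsilon>"
      using err n(1) by (blast intro: le_less_trans)
    then show ?thesis using n(2) g f by blast
  qed
qed

end

theorem proposition4:
  fixes Kw Ks D F :: nat and dw ds M :: real and E :: "nat set pmf" and lam :: "nat \<Rightarrow> real"
  assumes "1 \<le> Kw" and "1 \<le> Ks" and "Kw + Ks \<le> D" and "1 \<le> F"
    and "0 < ds" and "ds \<le> dw" and "dw < 1"
    and "valid_erasure_law Kw Ks dw ds E"
    and "0 \<le> M" and "M \<le> M_sep Kw Ks D F dw ds Kw"
    and "\<forall>t\<in>{0..Kw}. 0 \<le> lam t"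
    and "(\<Sum>t=0..Kw. lam t) = 1"
    and "(\<Sum>t=0..Kw. lam t * M_sep Kw Ks D F dw ds t) = M"
  shows "ereal (\<Sum>t=0..Kw. lam t * R_sep Kw Ks F dw ds t) \<le> capacity Kw Ks D F E M"
proof -
  have mixture: "rate_mixture Kw Ks D F dw ds M E lam \<eta>" if "0 < \<eta>" "\<eta> < 1/2" for \<eta>
    using assms that by unfold_locales auto
  have "0 < (\<Sum>t=0..Kw. lam t * R_sep Kw Ks F dw ds t)"
  proof -
    interpret rate_mixture Kw Ks D F dw ds M E lam "1/4" by (rule mixture) auto
    show ?thesis using L_pos unfolding L_def Rt_def .
  qed
  then show ?thesis
  proof (rule ereal_le_if_scaled_le)
    fix \<eta> :: real assume "0 < \<eta>" "\<eta> < 1/2"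
    then interpret rate_mixture Kw Ks D F dw ds M E lam \<eta> by (rule mixture)
    have "ereal R \<in> {ereal R | R. achievable Kw Ks D F E R M}" using achievable_R by blast
    then show "ereal ((1 - 2 * \<eta>) * (\<Sum>t=0..Kw. lam t * R_sep Kw Ks F dw ds t)) \<le> capacity Kw Ks D F E M"
      unfolding capacity_def R_def L_def Rt_def by (rule Sup_upper)
  qed
qed

end
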